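(* The map sending a triple $(r,H,\mathbf S_r)$ with $0\le r\le m$, $H\in\mathcal G(m,r;2)$, $\mathbf S_r\in\mathrm{Sym}(r;2)$ to the row space $$\mathrm{rs}\Big[\ \mathbf I_{m|r}\mathbf P_{\mathcal I}^{T}\ \ \Big|\ \ (\mathbf I_{m|r}\tilde{\mathbf S}_r+\mathbf I_{m|-r})\mathbf P_{\mathcal I}^{-1}\ \Big]\subseteq\mathbb F_2^{2m}$$ (the row space of an $m\times 2m$ binary matrix) is a bijection from the set of such triples onto the set $\mathcal L(2m,m)$ of Lagrangian subspaces of $\mathbb F_2^{2m}$. In particular $|\mathcal L(2m,m)|=\prod_{i=1}^m(2^i+1)=\sum_{r=0}^m 2^{r(r+1)/2}\binom{m}{r}_2$.
   Context: Binary vectors are columns over $\mathbb F_2$; $\mathrm{Sym}(r;2)$ is the set of symmetric binary $r\times r$ matrices and $\mathcal G(m,r;2)$ the set of $r$-dimensional subspaces of $\mathbb F_2^m$; $\binom{m}{r}_2=|\mathcal G(m,r;2)|$. On $\mathbb F_2^{2m}$, viewing elements as pairs $(\mathbf a,\mathbf b)$ with $\mathbf a,\mathbf b\in\mathbb F_2^m$, the symplectic form is $\langle(\mathbf a,\mathbf b),(\mathbf c,\mathbf d)\rangle_s=\mathbf b^T\mathbf c+\mathbf a^T\mathbf d$. A Lagrangian subspace is an $m$-dimensional subspace $L$ with $\langle x,y\rangle_s=0$ for all $x,y\in L$. $\mathbf I_{m|r}$ is the $m\times m$ matrix with $\mathbf I_r$ in the upper-left corner and zeros elsewhere, $\mathbf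 I_{m|-r}=\mathbf I_m-\mathbf I_{m|r}$. Echelon data: for $0\le r\le m$ and $H\in\mathcal G(m,r;2)$, let $\mathbf H_{\mathcal I}$ be the unique $m\times r$ binary matrix in column reduced echelon form with column space $H$: there are indices $i_1<\dots<i_r$, $\mathcal I=\{i_1,\dots,i_r\}$, such that rows $i_1,\dots,i_r$ of $\mathbf H_{\mathcal I}$ form $\mathbf I_r$ and column $j$ of $\mathbf H_{\mathcal I}$ is zero in all rows above row $i_j$. Let $\mathbf I_{\mathcal I}$ (resp. $\mathbf I_{\tilde{\mathcal I}}$) be the $m\times r$ (resp. $m\times(m-r)$) matrix whose columns are the standard basis vectors $\mathbf e_i$ with $i\in\mathcal I$ (resp. $i\notin\mathcal I$), in increasing order of $i$. Put $\mathbf P_{\mathcal I}=[\mathbf H_{\mathcal I}\ \ \mathbf I_{\tilde{\mathcal I}}]\in\mathrm{GL}(m;2)$, and define the $m\times(m-r)$ matrix $\tilde{\mathbf H}_{\mathcal I}$ by $\mathbf P_{\mathcal I}^{-T}=[\mathbf I_{\mathcal I}\ \ \tilde{\mathbf H}_{\mathcal I}]$. (For $r=0$: $H=\{0\}$, $\mathbf P_{\mathcal I}=\mathbf I_m$.) For $\mathbf S_r\in\mathrm{Sym}(r;2)$, $\tilde{\mathbf S}_r\in\mathrm{Sym}(m;2)$ denotes the matrix with $\mathbf S_r$ as its upper-left $r\times r$ block and zeros elsewhere. *)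

theory Defs
  imports "Jordan_Normal_Form.VS_Connect" "HOL-Library.Z2"
begin

text \<open>Binary vectors of length n are elements of carrier_vec n :: bit vec set,
  binary matrices are bit mat. Indices are 0-based.\<close>

abbreviation F2V :: "nat \<Rightarrow> (bit, bit vec) module" where
  "F2V n \<equiv> module_vec TYPE(bit) n"

definition grass :: "nat \<Rightarrow> nat \<Rightarrow> bit vec set set" where
  "grass m r = {W. subspace class_ring W (F2V m) \<and>
                   vectorspace.dim class_ring ((F2V m)\<lparr>carrier := W\<rparr>) = r}"

definition gauss_binom2 :: "nat \<Rightarrow> nat \<Rightarrow> nat" where
  "gauss_binom2 m r = card (grass m r)"

definition symp_form :: "nat \<Rightarrow> bit vec \<Rightarrow> bit vec \<Rightarrow> bit" where
  "symp_form m x y = vec_last x m \<bullet> vec_first y m + vec_first x m \<bullet> vec_last y m"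

definition lagrangians :: "nat \<Rightarrow> bit vec set set" where
  "lagrangians m = {L. L \<in> grass (2*m) m \<and> (\<forall>x\<in>L. \<forall>y\<in>L. symp_form m x y = 0)}"

definition crref :: "nat \<Rightarrow> nat \<Rightarrow> bit mat \<Rightarrow> nat set \<Rightarrow> bool" where
  "crref m r Hm I \<longleftrightarrow> Hm \<in> carrier_mat m r \<and> I \<subseteq> {0..<m} \<and> card I = r \<and>
     (let p = sorted_list_of_set I in
       (\<forall>j<r. \<forall>k<r. Hm $$ (p ! j, k) = (if j = k then 1 else 0)) \<and>
       (\<forall>j<r. \<forall>i<p ! j. Hm $$ (i, j) = 0))"

definition echelon :: "nat \<Rightarrow> nat \<Rightarrow> bit vec set \<Rightarrow> bit mat \<times> nat set" where
  "echelon m r H = (THE (Hm, I). crref m r Hm I \<and> vec_space.col_space m Hm = H)"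

definition mat_inv :: "nat \<Rightarrow> bit mat \<Rightarrow> bit mat" where
  "mat_inv m A = (SOME B. B \<in> carrier_mat m m \<and> A * B = 1\<^sub>m m \<and> B * A = 1\<^sub>m m)"

definition P_mat :: "nat \<Rightarrow> nat \<Rightarrow> bit vec set \<Rightarrow> bit mat" where
  "P_mat m r H = (let (Hm, I) = echelon m r H in
     mat_of_cols m (cols Hm @ map (unit_vec m) (sorted_list_of_set ({0..<m} - I))))"

definition I_upper :: "nat \<Rightarrow> nat \<Rightarrow> bit mat" where
  "I_upper m r = mat m m (\<lambda>(i, j). if i = j \<and> i < r then 1 else 0)"

definition I_lower :: "nat \<Rightarrow> nat \<Rightarrow> bit mat" where
  "I_lower m r = 1\<^sub>m m - I_upper m r"

definition sym_mats :: "nat \<Rightarrow> bit mat set" where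
  "sym_mats r = {S. S \<in> carrier_mat r r \<and> transpose_mat S = S}"

definition embed_sym :: "nat \<Rightarrow> bit mat \<Rightarrow> bit mat" where
  "embed_sym m S = mat m m (\<lambda>(i, j). if i < dim_row S \<and> j < dim_col S then S $$ (i, j) else 0)"

definition hconcat :: "bit mat \<Rightarrow> bit mat \<Rightarrow> bit mat" where
  "hconcat A B = mat (dim_row A) (dim_col A + dim_col B)
     (\<lambda>(i, j). if j < dim_col A then A $$ (i, j) else B $$ (i, j - dim_col A))"

definition triples :: "nat \<Rightarrow> (nat \<times> bit vec set \<times> bit mat) set" where
  "triples m = {(r, H, S). r \<le> m \<and> H \<in> grass m r \<and> S \<in> sym_mats r}"

definition lag_map :: "nat \<Rightarrow> nat \<times> bit vec set \<times> bit mat \<Rightarrow> bit vec set" where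
  "lag_map m = (\<lambda>(r, H, S).
     (let P = P_mat m r H in
      vec_space.row_space (2*m)
        (hconcat (I_upper m r * transpose_mat P)
                 ((I_upper m r * embed_sym m S + I_lower m r) * mat_inv m P))))"

end

(*
  A Lagrangian L in F_2^(2m) projects onto a subspace H of the first half, of some dimension r.
  H has a unique column reduced echelon basis H_I; completing it by unit vectors gives the
  invertible matrix P_I. In these coordinates the row space attached to (r, H, S_r) consists of
  the vectors whose first half is P_I u and whose second half z satisfies P_I^T z = S u + w, where
  u = I_{m|r} y and w = I_{m|-r} y for y in F_2^m. Hence H is recovered as the first projection,
  and S_r as the matrix of symplectic pairings of lifts of the columns of H_I; symmetry of S_r is
  exactly isotropy. Conversely both halves of the symplectic form on such a row space equal
  S u . u', so it is Lagrangian, and comparing cardinalities shows that every Lagrangian arises.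

  The count sums 2^(r(r+1)/2) symmetric matrices over the 2^inv(I) echelon matrices with pivot
  set I, and a generating function over pivot sets turns this sum into prod (2^i + 1).
*)

theory Submission
  imports Defs
begin

declare add_bit_eq_xor [simp del] mult_bit_eq_and [simp del]

lemma UNIV_bit: "(UNIV :: bit set) = {0, 1}"
  using bit.exhaust by auto

lemma card_UNIV_bit [simp]: "card (UNIV :: bit set) = 2"
  by (simp add: UNIV_bit)

lemma finite_UNIV_bit [simp]: "finite (UNIV :: bit set)"
  by (simp add: UNIV_bit)

lemma bit_add_eq_0_iff: "(x :: bit) + y = 0 \<longleftrightarrow> x = y"
  by (cases x; cases y) auto

lemma bit_add_add_cancel [simp]: "(a :: bit) + b + b = a"
  by (simp add: add.assoc)

lemma sum_bit_delta:
  assumes "finite I"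
  shows "(\<Sum>i\<in>I. (c i :: bit) * (if i' = i then 1 else 0)) = (if i' \<in> I then c i' else 0)"
proof -
  have "(\<Sum>i\<in>I. c i * (if i' = i then 1 else 0)) = (\<Sum>i\<in>I. if i' = i then c i else 0)"
    by (rule sum.cong) auto
  then show ?thesis using assms by simp
qed

lemma card_carrier_vec_bit: "card (carrier_vec n :: bit vec set) = 2 ^ n"
  and finite_carrier_vec_bit: "finite (carrier_vec n :: bit vec set)"
proof -
  let ?f = "\<lambda>v :: bit vec. restrict (\<lambda>i. v $ i) {0..<n}"
  have bij: "bij_betw ?f (carrier_vec n) ({0..<n} \<rightarrow>\<^sub>E (UNIV :: bit set))"
  proof (rule bij_betwI [where g = "\<lambda>f. vec n f"])
    show "?f \<in> carrier_vec n \<rightarrow> {0..<n} \<rightarrow>\<^sub>E UNIV" by auto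
    show "(\<lambda>f. vec n f) \<in> ({0..<n} \<rightarrow>\<^sub>E UNIV) \<rightarrow> carrier_vec n" by auto
    show "vec n (?f x) = x" if "x \<in> carrier_vec n" for x
      using that by (intro eq_vecI) auto
    show "?f (vec n y) = y" if "y \<in> {0..<n} \<rightarrow>\<^sub>E UNIV" for y
      using that by (intro ext) (auto simp: PiE_def extensional_def)
  qed
  show "card (carrier_vec n :: bit vec set) = 2 ^ n" "finite (carrier_vec n :: bit vec set)"
    using bij_betw_same_card [OF bij] bij_betw_finite [OF bij] by (auto simp: card_PiE finite_PiE)
qed

lemma index_mult_mat_vec_sum:
  "k < dim_row A \<Longrightarrow> dim_vec x = dim_col A \<Longrightarrow>
   (A *\<^sub>v x) $ k = (\<Sum>j\<in>{0..<dim_col A}. A $$ (k, j) * x $ j)"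
  by (simp add: scalar_prod_def)

lemma sum_split_at:
  fixes r m :: nat
  assumes "r \<le> m"
  shows "(\<Sum>j\<in>{0..<m}. f j) = (\<Sum>j\<in>{0..<r}. f j) + (\<Sum>t\<in>{0..<m - r}. f (r + t))"
proof -
  have "{0..<m} = {0..<r} \<union> {r..<m}" using assms by (auto simp: ivl_disj_un)
  then have "(\<Sum>j\<in>{0..<m}. f j) = (\<Sum>j\<in>{0..<r}. f j) + (\<Sum>j\<in>{r..<m}. f j)"
    by (simp add: sum.union_disjoint)
  moreover have "(\<Sum>j\<in>{r..<m}. f j) = (\<Sum>t\<in>{0..<m - r}. f (r + t))"
    using sum.shift_bounds_nat_ivl [of f 0 r "m - r"] assms by (simp add: add.commute)
  ultimately show ?thesis by simp
qed

section \<open>Binary vector spaces\<close>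

abbreviation f2_subspace :: "nat \<Rightarrow> bit vec set \<Rightarrow> bool" where
  "f2_subspace n W \<equiv> subspace class_ring W (F2V n)"

definition f2_dim :: "nat \<Rightarrow> bit vec set \<Rightarrow> nat" where
  "f2_dim n W = vectorspace.dim class_ring ((F2V n)\<lparr>carrier := W\<rparr>)"

lemma grass_iff: "H \<in> grass m r \<longleftrightarrow> f2_subspace m H \<and> f2_dim m H = r"
  unfolding grass_def f2_dim_def by auto

lemma f2_subspace_submodule: "f2_subspace n W \<Longrightarrow> submodule class_ring W (F2V n)"
  by (simp add: subspace_def)

lemma f2_subspace_carrier: "f2_subspace n W \<Longrightarrow> W \<subseteq> carrier_vec n"
  using f2_subspace_submodule [unfolded submodule_def] by (auto simp: module_vec_simps)

lemma f2_subspace_carrierD: "f2_subspace n W \<Longrightarrow> x \<in> W \<Longrightarrow> x \<in> carrier_vec n"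
  using f2_subspace_carrier by auto

lemma f2_subspace_add: "f2_subspace n W \<Longrightarrow> x \<in> W \<Longrightarrow> y \<in> W \<Longrightarrow> x + y \<in> W"
  using submodule.m_closed [OF f2_subspace_submodule [where n = n and W = W]] by (auto simp: module_vec_simps)

lemma f2_subspace_smult: "f2_subspace n W \<Longrightarrow> x \<in> W \<Longrightarrow> c \<cdot>\<^sub>v x \<in> W"
  using submodule.smult_closed [OF f2_subspace_submodule [where n = n and W = W]] by (auto simp: module_vec_simps)

lemma f2_subspace_zero: "f2_subspace n W \<Longrightarrow> 0\<^sub>v n \<in> W"
  using submodule.zero_closed [OF f2_subspace_submodule [where n = n and W = W]] by (auto simp: module_vec_simps)

lemma f2_subspaceI:
  assumes "W \<subseteq> carrier_vec n" "0\<^sub>v n \<in> W" "\<And>x y. x \<in> W \<Longrightarrow> y \<in> W \<Longrightarrow> x + y \<in> W"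
    "\<And>c x. x \<in> W \<Longrightarrow> c \<cdot>\<^sub>v x \<in> W"
  shows "f2_subspace n W"
  unfolding subspace_def submodule_def
  using assms vec_vs [where 'a = bit and n = n] vec_module [where 'a = bit and n = n]
  by (auto simp: module_vec_simps)

lemma finite_f2_subspace: "f2_subspace n W \<Longrightarrow> finite W"
  using f2_subspace_carrier finite_carrier_vec_bit finite_subset by blast

lemma f2_subspace_lincomb:
  assumes W: "f2_subspace n W" and J: "finite J" and v: "\<And>j. j \<in> J \<Longrightarrow> v j \<in> W"
  shows "vec n (\<lambda>k. \<Sum>j\<in>J. c j * v j $ k) \<in> W"
  using J v
proof (induction J rule: finite_induct)
  case empty
  then show ?case using f2_subspace_zero [OF W] by (simp add: zero_vec_def)
next
  case (insert j J)
  have "v j \<in> carrier_vec n" using insert f2_subspace_carrierD [OF W] by auto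
  then have "vec n (\<lambda>k. \<Sum>j\<in>insert j J. c j * v j $ k) = c j \<cdot>\<^sub>v v j + vec n (\<lambda>k. \<Sum>j\<in>J. c j * v j $ k)"
    using insert by (intro eq_vecI) auto
  moreover have "c j \<cdot>\<^sub>v v j \<in> W" using insert f2_subspace_smult [OF W] by auto
  ultimately show ?case using insert f2_subspace_add [OF W] by auto
qed

lemma card_span_lin_indpt:
  fixes \<beta> :: "bit vec set"
  assumes fb: "finite \<beta>" and bc: "\<beta> \<subseteq> carrier_vec n"
    and li: "\<not> LinearCombinations.module.lin_dep class_ring (F2V n) \<beta>"
  shows "card (LinearCombinations.module.span class_ring (F2V n) \<beta>) = 2 ^ card \<beta>"
proof -
  interpret V: vec_space "TYPE(bit)" n .
  let ?f = "\<lambda>a. V.lincomb a \<beta>"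
  have "inj_on ?f (\<beta> \<rightarrow>\<^sub>E UNIV)"
  proof (rule inj_onI)
    fix a b assume a: "a \<in> \<beta> \<rightarrow>\<^sub>E UNIV" and b: "b \<in> \<beta> \<rightarrow>\<^sub>E UNIV" and eq: "?f a = ?f b"
    have "V.lincomb (\<lambda>v. a v + b v) \<beta> = ?f a + ?f b"
      using V.lincomb_sum [OF fb bc, of a b] by auto
    also have "\<dots> = 0\<^sub>v n"
      using eq V.lincomb_closed [OF bc, of a] by auto
    finally have zero: "V.lincomb (\<lambda>v. a v + b v) \<beta> = 0\<^sub>v n" .
    have "\<forall>v\<in>\<beta>. a v + b v = 0"
    proof (rule ccontr)
      assume "\<not> ?thesis"
      then obtain v where "v \<in> \<beta>" "a v + b v \<noteq> 0" by auto
      then have "V.lin_dep \<beta>" unfolding V.lin_dep_def using fb zero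
        by (intro exI [of _ \<beta>] exI [of _ "\<lambda>v. a v + b v"] exI [of _ v]) auto
      with li show False by auto
    qed
    then show "a = b" using a b
      by (intro extensionalityI [where A = \<beta>]) (auto simp: bit_add_eq_0_iff PiE_def)
  qed
  moreover have "?f ` (\<beta> \<rightarrow>\<^sub>E UNIV) = V.span \<beta>"
  proof
    show "?f ` (\<beta> \<rightarrow>\<^sub>E UNIV) \<subseteq> V.span \<beta>"
      using fb unfolding V.span_def by blast
    show "V.span \<beta> \<subseteq> ?f ` (\<beta> \<rightarrow>\<^sub>E UNIV)"
    proof
      fix w assume "w \<in> V.span \<beta>"
      then obtain a where a: "V.lincomb a \<beta> = w" using V.finite_in_span [OF fb bc] by auto
      have "V.lincomb (restrict a \<beta>) \<beta> = V.lincomb a \<beta>"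
        by (rule V.lincomb_cong) (use bc in auto)
      moreover have "restrict a \<beta> \<in> \<beta> \<rightarrow>\<^sub>E UNIV" by auto
      ultimately show "w \<in> ?f ` (\<beta> \<rightarrow>\<^sub>E UNIV)" using a by (metis image_eqI)
    qed
  qed
  ultimately have "card (V.span \<beta>) = card (\<beta> \<rightarrow>\<^sub>E (UNIV :: bit set))"
    using card_image by metis
  then show ?thesis using fb by (simp add: card_PiE)
qed

lemma card_f2_subspace:
  assumes W: "f2_subspace n W"
  shows "card W = 2 ^ f2_dim n W"
proof -
  interpret V: vec_space "TYPE(bit)" n .
  have sm: "submodule class_ring W (F2V n)" using f2_subspace_submodule [OF W] .
  interpret VW: vectorspace class_ring "(F2V n)\<lparr>carrier := W\<rparr>"
    using V.subspace_is_vs [OF W] .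
  have Wc: "W \<subseteq> carrier_vec n" using f2_subspace_carrier [OF W] .
  have "V.span W = W"
    using V.span_is_subset [OF _ sm] V.in_own_span [OF Wc] by auto
  then have "VW.fin_dim"
    unfolding VW.fin_dim_def
    using finite_f2_subspace [OF W] V.span_li_not_depend(1) [OF _ sm, of W] by auto
  then obtain \<beta> where fb: "finite \<beta>" and b: "VW.basis \<beta>"
    using VW.finite_basis_exists by blast
  have bW: "\<beta> \<subseteq> W" using b unfolding VW.basis_def by auto
  have "V.span \<beta> = W" and "\<not> V.lin_dep \<beta>"
    using b V.span_li_not_depend [OF bW sm] unfolding VW.basis_def by auto
  then have "card W = 2 ^ card \<beta>"
    using card_span_lin_indpt [OF fb] bW Wc by auto
  then show ?thesis unfolding f2_dim_def using VW.dim_basis [OF fb b] by simp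
qed

lemma card_grass_member: "H \<in> grass m r \<Longrightarrow> card H = 2 ^ r"
  using grass_iff card_f2_subspace by metis

lemma finite_grass: "finite (grass m r)"
proof -
  have "grass m r \<subseteq> Pow (carrier_vec m)" using grass_iff f2_subspace_carrier by blast
  then show ?thesis using finite_carrier_vec_bit finite_subset by blast
qed

section \<open>Echelon bases\<close>

definition echelon_basis :: "nat \<Rightarrow> bit vec set \<Rightarrow> nat set \<Rightarrow> (nat \<Rightarrow> bit vec) \<Rightarrow> bool" where
  "echelon_basis m H I v \<longleftrightarrow> I \<subseteq> {0..<m} \<and>
     (\<forall>i\<in>I. v i \<in> H \<and> (\<forall>i'\<in>I. v i $ i' = (if i' = i then 1 else 0)) \<and> (\<forall>k<i. v i $ k = 0)) \<and>
     (\<forall>h\<in>H. h = vec m (\<lambda>k. \<Sum>i\<in>I. h $ i * v i $ k))"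

lemma echelon_basisD:
  assumes "echelon_basis m H I v"
  shows "I \<subseteq> {0..<m}" "finite I" "\<And>i. i \<in> I \<Longrightarrow> v i \<in> H"
    "\<And>i i'. i \<in> I \<Longrightarrow> i' \<in> I \<Longrightarrow> v i $ i' = (if i' = i then 1 else 0)"
    "\<And>i k. i \<in> I \<Longrightarrow> k < i \<Longrightarrow> v i $ k = 0"
    "\<And>h. h \<in> H \<Longrightarrow> h = vec m (\<lambda>k. \<Sum>i\<in>I. h $ i * v i $ k)"
  using assms unfolding echelon_basis_def by (auto intro: finite_subset)

lemma f2_subspace_vanishing:
  assumes W: "f2_subspace m H" and p: "p < m"
  shows "f2_subspace m {h\<in>H. h $ p = 0}"
proof (rule f2_subspaceI)
  show "{h \<in> H. h $ p = 0} \<subseteq> carrier_vec m" using f2_subspace_carrier [OF W] by auto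
  show "0\<^sub>v m \<in> {h \<in> H. h $ p = 0}" using f2_subspace_zero [OF W] p by auto
  show "x + y \<in> {h \<in> H. h $ p = 0}" if "x \<in> {h \<in> H. h $ p = 0}" "y \<in> {h \<in> H. h $ p = 0}" for x y
  proof -
    have "y \<in> carrier_vec m" using that f2_subspace_carrierD [OF W] by auto
    then show ?thesis using that f2_subspace_add [OF W] p by auto
  qed
  show "c \<cdot>\<^sub>v x \<in> {h \<in> H. h $ p = 0}" if "x \<in> {h \<in> H. h $ p = 0}" for c x
  proof -
    have "x \<in> carrier_vec m" using that f2_subspace_carrierD [OF W] by auto
    then show ?thesis using that f2_subspace_smult [OF W] p by auto
  qed
qed

text \<open>The induction step: an echelon basis of the hyperplane section \<open>h $ p = 0\<close> of \<open>H\<close>,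
  where \<open>p\<close> is the first coordinate not vanishing on \<open>H\<close>, is completed by reducing a
  vector \<open>u\<close> with \<open>u $ p = 1\<close> against it.\<close>

lemma echelon_basis_reduce:
  assumes W: "f2_subspace m H" and p: "p < m" and uH: "u \<in> H" and u1: "u $ p = 1"
    and below: "\<And>h k. h \<in> H \<Longrightarrow> k < p \<Longrightarrow> h $ k = 0"
    and E': "echelon_basis m {h\<in>H. h $ p = 0} I' v'"
  defines "w \<equiv> vec m (\<lambda>k. u $ k + (\<Sum>i\<in>I'. u $ i * v' i $ k))"
  shows "p \<notin> I'" and "w \<in> H" and "w $ p = 1" and "\<And>i'. i' \<in> I' \<Longrightarrow> w $ i' = 0"
    and "\<And>k. k < p \<Longrightarrow> w $ k = 0"
proof -
  let ?H' = "{h\<in>H. h $ p = 0}"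
  note D = echelon_basisD [OF E']
  have W': "f2_subspace m ?H'" using f2_subspace_vanishing [OF W p] .
  have gt: "p < i" if "i \<in> I'" for i
  proof -
    have "v' i \<in> H" "v' i $ i = 1" "v' i $ p = 0" using D(3,4) that by auto
    then show ?thesis using below [of "v' i" i] by (metis linorder_neqE_nat zero_neq_one)
  qed
  then show "p \<notin> I'" by blast
  have "w = u + vec m (\<lambda>k. \<Sum>i\<in>I'. u $ i * v' i $ k)"
    unfolding w_def using f2_subspace_carrierD [OF W uH] by (intro eq_vecI) auto
  moreover have "vec m (\<lambda>k. \<Sum>i\<in>I'. u $ i * v' i $ k) \<in> H"
    using f2_subspace_lincomb [OF W' D(2,3)] by auto
  ultimately show "w \<in> H" using f2_subspace_add [OF W uH] by simp
  have "(\<Sum>i\<in>I'. u $ i * v' i $ p) = 0"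
    by (rule sum.neutral) (use D(3) in auto)
  then show "w $ p = 1"
    unfolding w_def using p u1 by simp
  show "w $ i' = 0" if "i' \<in> I'" for i'
  proof -
    have "(\<Sum>i\<in>I'. u $ i * v' i $ i') = (\<Sum>i\<in>I'. u $ i * (if i' = i then 1 else 0))"
      by (rule sum.cong) (use D(4) that in auto)
    then show ?thesis unfolding w_def using D(1) that sum_bit_delta [OF D(2)] by auto
  qed
  show "w $ k = 0" if "k < p" for k
  proof -
    have "(\<Sum>i\<in>I'. u $ i * v' i $ k) = 0"
      by (rule sum.neutral) (use D(5) gt that in force)
    then show ?thesis unfolding w_def using that p below [OF uH that] by simp
  qed
qed

lemma echelon_basis_insert:
  assumes W: "f2_subspace m H" and p: "p < m" and uH: "u \<in> H" and u1: "u $ p = 1"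
    and below: "\<And>h k. h \<in> H \<Longrightarrow> k < p \<Longrightarrow> h $ k = 0"
    and E': "echelon_basis m {h\<in>H. h $ p = 0} I' v'"
  defines "w \<equiv> vec m (\<lambda>k. u $ k + (\<Sum>i\<in>I'. u $ i * v' i $ k))"
  shows "echelon_basis m H (insert p I') (v'(p := w))"
proof -
  let ?H' = "{h\<in>H. h $ p = 0}"
  note D = echelon_basisD [OF E']
  have R: "p \<notin> I'" "w \<in> H" "w $ p = 1" "\<And>i'. i' \<in> I' \<Longrightarrow> w $ i' = 0"
    "\<And>k. k < p \<Longrightarrow> w $ k = 0"
    using echelon_basis_reduce [where m = m and H = H and p = p and u = u and I' = I' and v' = v']
      W p uH u1 below E' unfolding w_def by blast+
  have wc: "w \<in> carrier_vec m" unfolding w_def by simp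
  show ?thesis
    unfolding echelon_basis_def
  proof (intro conjI ballI allI impI)
    show "insert p I' \<subseteq> {0..<m}" using D(1) p by auto
  next
    fix i assume i: "i \<in> insert p I'"
    show "(v'(p := w)) i \<in> H" using i R(2) D(3) R(1) by auto
    show "(v'(p := w)) i $ i' = (if i' = i then 1 else 0)" if "i' \<in> insert p I'" for i'
      using i that R(3) R(4) D(3,4) R(1) by auto
    show "(v'(p := w)) i $ k = 0" if "k < i" for k
      using i that R(5) D(5) R(1) by auto
  next
    fix h assume hH: "h \<in> H"
    define g where "g = h + h $ p \<cdot>\<^sub>v w"
    have hc: "h \<in> carrier_vec m" using f2_subspace_carrierD [OF W hH] .
    have "g \<in> H" unfolding g_def using f2_subspace_add [OF W hH f2_subspace_smult [OF W R(2)]] .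
    moreover have "g $ p = 0" unfolding g_def using wc p R(3) by simp
    ultimately have gH': "g \<in> ?H'" by simp
    have gi: "g $ i = h $ i" if "i \<in> I'" for i
      unfolding g_def using wc that D(1) R(4) [OF that] by auto
    show "h = vec m (\<lambda>k. \<Sum>i\<in>insert p I'. h $ i * (v'(p := w)) i $ k)"
    proof (rule eq_vecI)
      fix k assume "k < dim_vec (vec m (\<lambda>k. \<Sum>i\<in>insert p I'. h $ i * (v'(p := w)) i $ k))"
      then have k: "k < m" by simp
      have "g $ k = (\<Sum>i\<in>I'. g $ i * v' i $ k)"
        using arg_cong [OF D(6) [OF gH'], of "\<lambda>x. x $ k"] k by simp
      also have "\<dots> = (\<Sum>i\<in>I'. h $ i * (v'(p := w)) i $ k)"
        by (rule sum.cong) (use gi R(1) in auto)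
      finally have gk: "g $ k = (\<Sum>i\<in>I'. h $ i * (v'(p := w)) i $ k)" .
      have "g $ k = h $ k + h $ p * w $ k" unfolding g_def using wc k by simp
      then have "h $ k = (\<Sum>i\<in>I'. h $ i * (v'(p := w)) i $ k) + h $ p * w $ k"
        unfolding gk [symmetric] by simp
      then show "h $ k = vec m (\<lambda>k. \<Sum>i\<in>insert p I'. h $ i * (v'(p := w)) i $ k) $ k"
        using k D(2) R(1) by (simp add: add.commute)
    qed (use hc in simp)
  qed
qed

lemma echelon_basis_exists:
  assumes "f2_subspace m H"
  shows "\<exists>I v. echelon_basis m H I v"
  using assms
proof (induction "card H" arbitrary: H rule: less_induct)
  case less
  note W = less.prems
  show ?case
  proof (cases "\<exists>h\<in>H. \<exists>k<m. h $ k = 1")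
    case False
    have "h = 0\<^sub>v m" if "h \<in> H" for h
      using False that f2_subspace_carrierD [OF W that] by (intro eq_vecI) auto
    then have "echelon_basis m H {} (\<lambda>_. 0\<^sub>v m)"
      by (auto simp: echelon_basis_def zero_vec_def)
    then show ?thesis by blast
  next
    case True
    define p where "p = (LEAST k. \<exists>h\<in>H. k < m \<and> h $ k = 1)"
    have "\<exists>h\<in>H. p < m \<and> h $ p = 1"
      unfolding p_def by (rule LeastI_ex) (use True in blast)
    then obtain u where uH: "u \<in> H" and p: "p < m" and u1: "u $ p = 1" by auto
    have below: "h $ k = 0" if "h \<in> H" "k < p" for h k
      using not_less_Least [of k "\<lambda>k. \<exists>h\<in>H. k < m \<and> h $ k = 1"] that p unfolding p_def by auto
    have "u \<notin> {h\<in>H. h $ p = 0}" using u1 by simp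
    then have "{h\<in>H. h $ p = 0} \<subset> H" using uH by blast
    then have "card {h\<in>H. h $ p = 0} < card H" using finite_f2_subspace [OF W] psubset_card_mono by blast
    then obtain I' v' where "echelon_basis m {h\<in>H. h $ p = 0} I' v'"
      using less.hyps f2_subspace_vanishing [OF W p] by blast
    then show ?thesis using echelon_basis_insert [OF W p uH u1 below] by blast
  qed
qed

lemma card_echelon_basis:
  assumes W: "f2_subspace m H" and E: "echelon_basis m H I v"
  shows "card H = 2 ^ card I"
proof -
  note D = echelon_basisD [OF E]
  let ?f = "\<lambda>h :: bit vec. restrict (\<lambda>i. h $ i) I"
  have "inj_on ?f H"
  proof (rule inj_onI)
    fix h h' assume h: "h \<in> H" and h': "h' \<in> H" and eq: "?f h = ?f h'"
    then have "\<And>i. i \<in> I \<Longrightarrow> h $ i = h' $ i" by (metis restrict_apply')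
    then have "vec m (\<lambda>k. \<Sum>i\<in>I. h $ i * v i $ k) = vec m (\<lambda>k. \<Sum>i\<in>I. h' $ i * v i $ k)"
      by (intro eq_vecI) auto
    then show "h = h'" using D(6) [OF h] D(6) [OF h'] by simp
  qed
  moreover have "?f ` H = I \<rightarrow>\<^sub>E UNIV"
  proof
    show "?f ` H \<subseteq> I \<rightarrow>\<^sub>E UNIV" by auto
    show "I \<rightarrow>\<^sub>E UNIV \<subseteq> ?f ` H"
    proof
      fix c assume c: "c \<in> I \<rightarrow>\<^sub>E (UNIV :: bit set)"
      define h where "h = vec m (\<lambda>k. \<Sum>i\<in>I. c i * v i $ k)"
      have "?f h = c"
      proof
        fix i'
        show "?f h i' = c i'"
        proof (cases "i' \<in> I")
          case True
          then have "h $ i' = (\<Sum>i\<in>I. c i * (if i' = i then 1 else 0))"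
            unfolding h_def using D(1,4) by (auto intro: sum.cong)
          then show ?thesis using sum_bit_delta [OF D(2)] True by simp
        qed (use c in \<open>auto simp: PiE_def extensional_def\<close>)
      qed
      moreover have "h \<in> H" unfolding h_def by (rule f2_subspace_lincomb [OF W D(2,3)])
      ultimately show "c \<in> ?f ` H" by force
    qed
  qed
  ultimately have "card H = card (I \<rightarrow>\<^sub>E (UNIV :: bit set))" by (metis card_image)
  then show ?thesis using D(2) by (simp add: card_PiE)
qed

section \<open>Column reduced echelon form\<close>

abbreviation pivot :: "nat set \<Rightarrow> nat \<Rightarrow> nat" where
  "pivot I j \<equiv> sorted_list_of_set I ! j"

lemma pivot_less: "finite I \<Longrightarrow> j < j' \<Longrightarrow> j' < card I \<Longrightarrow> pivot I j < pivot I j'"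
  by (metis length_sorted_list_of_set sorted_wrt_nth_less strict_sorted_list_of_set)

lemma pivot_le: "finite I \<Longrightarrow> j \<le> j' \<Longrightarrow> j' < card I \<Longrightarrow> pivot I j \<le> pivot I j'"
  using pivot_less [of I j j'] by (cases "j = j'") auto

lemma pivot_in: "finite I \<Longrightarrow> j < card I \<Longrightarrow> pivot I j \<in> I"
  by (metis length_sorted_list_of_set nth_mem set_sorted_list_of_set)

lemma pivot_inj_iff: "finite I \<Longrightarrow> j < card I \<Longrightarrow> j' < card I \<Longrightarrow> pivot I j = pivot I j' \<longleftrightarrow> j = j'"
  by (metis distinct_sorted_list_of_set length_sorted_list_of_set nth_eq_iff_index_eq)

lemma pivot_surj: "finite I \<Longrightarrow> i \<in> I \<Longrightarrow> \<exists>j<card I. pivot I j = i"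
  by (metis in_set_conv_nth length_sorted_list_of_set set_sorted_list_of_set)

lemma sum_pivots:
  assumes "finite I"
  shows "(\<Sum>j\<in>{0..<card I}. f (pivot I j)) = sum f I"
proof -
  let ?p = "sorted_list_of_set I"
  have "sum f I = sum_list (map f ?p)"
    using assms by (simp add: sum_list_distinct_conv_sum_set)
  also have "\<dots> = (\<Sum>j\<in>{0..<card I}. f (pivot I j))" by (simp add: sum_list_sum_nth)
  finally show ?thesis by simp
qed

lemma mult_unit_vec_index:
  "(A :: 'a :: semiring_1 mat) \<in> carrier_mat m r \<Longrightarrow> j < r \<Longrightarrow> k < m \<Longrightarrow>
   (A *\<^sub>v unit_vec r j) $ k = A $$ (k, j)"
  by simp

lemma crrefD:
  assumes "crref m r Hm I"
  shows "Hm \<in> carrier_mat m r" "I \<subseteq> {0..<m}" "card I = r" "finite I"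
    "\<And>j k. j < r \<Longrightarrow> k < r \<Longrightarrow> Hm $$ (pivot I j, k) = (if j = k then 1 else 0)"
    "\<And>j i. j < r \<Longrightarrow> i < pivot I j \<Longrightarrow> Hm $$ (i, j) = 0"
    "\<And>j. j < r \<Longrightarrow> pivot I j < m"
  using assms unfolding crref_def Let_def
  by (auto dest: finite_subset intro: finite_subset)
    (metis atLeastLessThan_iff finite_atLeastLessThan finite_subset pivot_in subsetD)

lemma crref_le: "crref m r Hm I \<Longrightarrow> r \<le> m"
  using card_mono [of "{0..<m}" I] crrefD(2,3) by fastforce

lemma crref_mult_pivot:
  assumes C: "crref m r Hm I" and x: "x \<in> carrier_vec r" and j: "j < r"
  shows "(Hm *\<^sub>v x) $ pivot I j = x $ j"
proof -
  note D = crrefD [OF C]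
  have "(Hm *\<^sub>v x) $ pivot I j = (\<Sum>k\<in>{0..<r}. Hm $$ (pivot I j, k) * x $ k)"
    using index_mult_mat_vec_sum [of "pivot I j" Hm x] D(1) D(7) [OF j] x by auto
  also have "\<dots> = (\<Sum>k\<in>{0..<r}. x $ k * (if j = k then 1 else 0))"
    by (rule sum.cong) (use D(5) [OF j] in auto)
  also have "\<dots> = x $ j" using sum_bit_delta [of "{0..<r}" "\<lambda>k. x $ k" j] j by simp
  finally show ?thesis .
qed

lemma col_space_eq_image:
  assumes "Hm \<in> carrier_mat m r"
  shows "vec_space.col_space m Hm = (\<lambda>x. Hm *\<^sub>v x) ` carrier_vec r"
  using vec_space.col_space_eq [OF assms] assms by auto

lemma col_space_f2_subspace:
  assumes "Hm \<in> carrier_mat m r"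
  shows "f2_subspace m (vec_space.col_space m Hm)"
proof -
  interpret V: vec_space "TYPE(bit)" m .
  show ?thesis unfolding V.col_space_def
    by (rule V.span_is_subspace) (use assms in \<open>auto simp: cols_def\<close>)
qed

lemma crref_mult_inj:
  assumes C: "crref m r Hm I"
  shows "inj_on (\<lambda>x. Hm *\<^sub>v x) (carrier_vec r)"
proof (rule inj_onI)
  fix x y assume x: "x \<in> carrier_vec r" and y: "y \<in> carrier_vec r" and eq: "Hm *\<^sub>v x = Hm *\<^sub>v y"
  show "x = y"
    using crref_mult_pivot [OF C x] crref_mult_pivot [OF C y] eq x y by (intro eq_vecI) auto
qed

lemma crref_col_space_grass:
  assumes C: "crref m r Hm I"
  shows "vec_space.col_space m Hm \<in> grass m r"
proof -
  note D = crrefD [OF C]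
  have W: "f2_subspace m (vec_space.col_space m Hm)" using col_space_f2_subspace [OF D(1)] .
  have "card (vec_space.col_space m Hm) = 2 ^ r"
    using card_image [OF crref_mult_inj [OF C]] col_space_eq_image [OF D(1)] card_carrier_vec_bit by simp
  then have "(2 :: nat) ^ f2_dim m (vec_space.col_space m Hm) = 2 ^ r" using card_f2_subspace [OF W] by simp
  then show ?thesis using W grass_iff by simp
qed

lemma echelon_basis_crref:
  assumes W: "f2_subspace m H" and E: "echelon_basis m H I v"
  defines "Hm \<equiv> mat m (card I) (\<lambda>(k, j). v (pivot I j) $ k)"
  shows "crref m (card I) Hm I" and "vec_space.col_space m Hm = H"
proof -
  note D = echelon_basisD [OF E]
  have pm: "pivot I j < m" if "j < card I" for j using pivot_in [OF D(2) that] D(1) by auto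
  show "crref m (card I) Hm I"
    unfolding crref_def Let_def
  proof (intro conjI allI impI)
    fix j assume j: "j < card I"
    show "Hm $$ (pivot I j, k) = (if j = k then 1 else 0)" if "k < card I" for k
      using pm j that D(4) pivot_in [OF D(2)] pivot_inj_iff [OF D(2)] unfolding Hm_def by auto
    show "Hm $$ (i, j) = 0" if "i < pivot I j" for i
      using pm [OF j] j that D(5) pivot_in [OF D(2)] unfolding Hm_def by auto
  qed (use D(1) in \<open>auto simp: Hm_def\<close>)
  have Hm_mult: "Hm *\<^sub>v x = vec m (\<lambda>k. \<Sum>j\<in>{0..<card I}. x $ j * v (pivot I j) $ k)"
    if "x \<in> carrier_vec (card I)" for x
    using that unfolding Hm_def by (intro eq_vecI) (auto simp: scalar_prod_def mult.commute intro!: sum.cong)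
  have "Hm *\<^sub>v x \<in> H" if "x \<in> carrier_vec (card I)" for x
    unfolding Hm_mult [OF that] by (rule f2_subspace_lincomb [OF W]) (use D(3) pivot_in [OF D(2)] in auto)
  moreover have "h \<in> (\<lambda>x. Hm *\<^sub>v x) ` carrier_vec (card I)" if h: "h \<in> H" for h
  proof
    let ?x = "vec (card I) (\<lambda>j. h $ pivot I j)"
    have "Hm *\<^sub>v ?x = vec m (\<lambda>k. \<Sum>j\<in>{0..<card I}. h $ pivot I j * v (pivot I j) $ k)"
      unfolding Hm_mult [OF vec_carrier] by simp
    also have "\<dots> = vec m (\<lambda>k. \<Sum>i\<in>I. h $ i * v i $ k)"
      by (intro arg_cong [where f = "vec m"] ext sum_pivots [OF D(2)])
    also have "\<dots> = h" using D(6) [OF h] by simp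
    finally show "h = Hm *\<^sub>v ?x" by simp
  qed simp
  ultimately show "vec_space.col_space m Hm = H"
    using col_space_eq_image [of Hm m "card I"] unfolding Hm_def by auto
qed

lemma crref_exists:
  assumes "H \<in> grass m r"
  shows "\<exists>Hm I. crref m r Hm I \<and> vec_space.col_space m Hm = H"
proof -
  have W: "f2_subspace m H" and d: "f2_dim m H = r" using assms grass_iff by auto
  obtain I v where E: "echelon_basis m H I v" using echelon_basis_exists [OF W] by blast
  have "(2 :: nat) ^ card I = 2 ^ r" using card_echelon_basis [OF W E] card_f2_subspace [OF W] d by simp
  then have "card I = r" by simp
  then show ?thesis using echelon_basis_crref [OF W E] by blast
qed

definition leading_positions :: "nat \<Rightarrow> bit vec set \<Rightarrow> nat set" where
  "leading_positions m H = {i. i < m \<and> (\<exists>h\<in>H. h $ i = 1 \<and> (\<forall>k<i. h $ k = 0))}"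

lemma crref_leading_entry:
  assumes C: "crref m r Hm I" and x: "x \<in> carrier_vec r" and j0: "j0 < r" "x $ j0 = 1"
    and before: "\<And>j. j < j0 \<Longrightarrow> x $ j = 0"
  shows "(Hm *\<^sub>v x) $ pivot I j0 = 1" and "\<And>k. k < pivot I j0 \<Longrightarrow> (Hm *\<^sub>v x) $ k = 0"
proof -
  note D = crrefD [OF C]
  show "(Hm *\<^sub>v x) $ pivot I j0 = 1" using crref_mult_pivot [OF C x j0(1)] j0 by simp
  fix k assume k: "k < pivot I j0"
  have "Hm $$ (k, j) * x $ j = 0" if j: "j < r" for j
  proof (cases "j < j0")
    case False
    then have "pivot I j0 \<le> pivot I j" using pivot_le [OF D(4), of j0 j] j D(3) by simp
    then show ?thesis using D(6) [OF j, of k] k by simp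
  qed (use before in simp)
  moreover have "k < m" using k D(7) [OF j0(1)] by simp
  ultimately show "(Hm *\<^sub>v x) $ k = 0"
    using index_mult_mat_vec_sum [of k Hm x] D(1) x by (auto intro: sum.neutral)
qed

lemma crref_leading_positions:
  assumes C: "crref m r Hm I"
  shows "leading_positions m (vec_space.col_space m Hm) = I"
proof
  note D = crrefD [OF C]
  have cs: "vec_space.col_space m Hm = (\<lambda>x. Hm *\<^sub>v x) ` carrier_vec r"
    using col_space_eq_image [OF D(1)] .
  show "I \<subseteq> leading_positions m (vec_space.col_space m Hm)"
  proof
    fix i assume "i \<in> I"
    then obtain j where j: "j < r" and ij: "pivot I j = i" using pivot_surj [OF D(4)] D(3) by auto
    have "unit_vec r j $ j' = 0" if "j' < j" for j' using that j by simp
    then show "i \<in> leading_positions m (vec_space.col_space m Hm)"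
      using crref_leading_entry [OF C _ j, of "unit_vec r j"] D(7) [OF j] j ij cs
      unfolding leading_positions_def by auto
  qed
  show "leading_positions m (vec_space.col_space m Hm) \<subseteq> I"
  proof
    fix i assume "i \<in> leading_positions m (vec_space.col_space m Hm)"
    then obtain x where x: "x \<in> carrier_vec r" and hi: "(Hm *\<^sub>v x) $ i = 1"
      and hb: "\<And>k. k < i \<Longrightarrow> (Hm *\<^sub>v x) $ k = 0" and im: "i < m"
      unfolding leading_positions_def cs by auto
    have "\<exists>j<r. x $ j = 1"
    proof (rule ccontr)
      assume "\<not> ?thesis"
      then have "(Hm *\<^sub>v x) $ i = 0" using im x D(1) by (auto simp: scalar_prod_def intro!: sum.neutral)
      then show False using hi by simp
    qed
    define j0 where "j0 = (LEAST j. j < r \<and> x $ j = 1)"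
    have j0: "j0 < r" "x $ j0 = 1"
      using LeastI_ex [OF \<open>\<exists>j<r. x $ j = 1\<close>] unfolding j0_def by auto
    have "x $ j = 0" if "j < j0" for j
      using not_less_Least [of j "\<lambda>j. j < r \<and> x $ j = 1"] that j0 unfolding j0_def by auto
    note lead = crref_leading_entry [OF C x j0 this]
    have "i = pivot I j0"
      using lead hi hb by (metis linorder_neqE_nat zero_neq_one)
    then show "i \<in> I" using pivot_in [OF D(4)] j0 D(3) by simp
  qed
qed

lemma crref_unique:
  assumes C: "crref m r Hm I" and C': "crref m r Hm' I'"
    and eq: "vec_space.col_space m Hm = vec_space.col_space m Hm'"
  shows "Hm = Hm'" and "I = I'"
proof -
  show II: "I = I'" using crref_leading_positions [OF C] crref_leading_positions [OF C'] eq by simp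
  note D = crrefD [OF C] and D' = crrefD [OF C']
  show "Hm = Hm'"
  proof (rule eq_matI)
    fix k j assume "k < dim_row Hm'" and "j < dim_col Hm'"
    then have k: "k < m" and j: "j < r" using D'(1) by auto
    have "Hm' *\<^sub>v unit_vec r j \<in> vec_space.col_space m Hm"
      using eq col_space_eq_image [OF D'(1)] by auto
    then obtain x where x: "x \<in> carrier_vec r" and hx: "Hm *\<^sub>v x = Hm' *\<^sub>v unit_vec r j"
      using col_space_eq_image [OF D(1)] by auto
    have "x = unit_vec r j"
    proof (rule eq_vecI)
      fix l assume "l < dim_vec (unit_vec r j)"
      then have l: "l < r" by simp
      have "x $ l = (Hm' *\<^sub>v unit_vec r j) $ pivot I' l" using crref_mult_pivot [OF C x l] hx II by simp
      also have "\<dots> = unit_vec r j $ l" using crref_mult_pivot [OF C' _ l, of "unit_vec r j"] by simp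
      finally show "x $ l = unit_vec r j $ l" .
    qed (use x in simp)
    then show "Hm $$ (k, j) = Hm' $$ (k, j)"
      using hx mult_unit_vec_index [OF D(1) j k] mult_unit_vec_index [OF D'(1) j k] by simp
  qed (use D(1) D'(1) in auto)
qed

lemma echelon_crref:
  assumes "H \<in> grass m r"
  shows "crref m r (fst (echelon m r H)) (snd (echelon m r H))"
    and "vec_space.col_space m (fst (echelon m r H)) = H"
proof -
  obtain Hm I where C: "crref m r Hm I" and cs: "vec_space.col_space m Hm = H"
    using crref_exists [OF assms] by blast
  have "echelon m r H = (Hm, I)"
    unfolding echelon_def
  proof (rule the_equality)
    fix z assume z: "case z of (Hm, I) \<Rightarrow> crref m r Hm I \<and> vec_space.col_space m Hm = H"
    obtain Hm' I' where z_eq: "z = (Hm', I')" by (cases z)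
    then have "crref m r Hm' I'" "vec_space.col_space m Hm = vec_space.col_space m Hm'"
      using z cs by auto
    then show "z = (Hm, I)" using crref_unique [OF C] z_eq by metis
  qed (use C cs in simp)
  then show "crref m r (fst (echelon m r H)) (snd (echelon m r H))"
    and "vec_space.col_space m (fst (echelon m r H)) = H"
    using C cs by simp_all
qed

section \<open>Counting subspaces by their pivot sets\<close>

definition inversions :: "nat \<Rightarrow> nat set \<Rightarrow> (nat \<times> nat) set" where
  "inversions m I = {(a, b). a \<in> I \<and> b < m \<and> b \<notin> I \<and> a < b}"

definition free_entries :: "nat \<Rightarrow> nat \<Rightarrow> nat set \<Rightarrow> (nat \<times> nat) set" where
  "free_entries m r I = {(k, j). j < r \<and> k < m \<and> k \<notin> I \<and> pivot I j < k}"

lemma finite_inversions: "finite (inversions m I)"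
  by (rule finite_subset [of _ "{0..<m} \<times> {0..<m}"]) (auto simp: inversions_def)

lemma finite_free_entries: "finite (free_entries m r I)"
  by (rule finite_subset [of _ "{0..<m} \<times> {0..<r}"]) (auto simp: free_entries_def)

lemma card_free_entries:
  assumes fin: "finite I" and cI: "card I = r"
  shows "card (free_entries m r I) = card (inversions m I)"
proof -
  have "bij_betw (\<lambda>(k, j). (pivot I j, k)) (free_entries m r I) (inversions m I)"
    unfolding bij_betw_def
  proof
    show "inj_on (\<lambda>(k, j). (pivot I j, k)) (free_entries m r I)"
      by (rule inj_onI) (auto simp: free_entries_def pivot_inj_iff [OF fin] cI)
    show "(\<lambda>(k, j). (pivot I j, k)) ` free_entries m r I = inversions m I"
    proof
      show "(\<lambda>(k, j). (pivot I j, k)) ` free_entries m r I \<subseteq> inversions m I"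
        using pivot_in [OF fin] cI by (auto simp: free_entries_def inversions_def)
      show "inversions m I \<subseteq> (\<lambda>(k, j). (pivot I j, k)) ` free_entries m r I"
      proof
        fix p assume "p \<in> inversions m I"
        then obtain a b where p: "p = (a, b)" and a: "a \<in> I" and b: "b < m" "b \<notin> I" "a < b"
          unfolding inversions_def by auto
        obtain j where j: "j < card I" "pivot I j = a" using pivot_surj [OF fin a] by auto
        have "(b, j) \<in> free_entries m r I" unfolding free_entries_def using j b cI by auto
        then show "p \<in> (\<lambda>(k, j). (pivot I j, k)) ` free_entries m r I" using p j by force
      qed
    qed
  qed
  then show ?thesis by (rule bij_betw_same_card)
qed

lemma crref_fixed_entry:
  assumes C: "crref m r Hm I" and k: "k < m" and j: "j < r" and free: "(k, j) \<notin> free_entries m r I"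
  shows "Hm $$ (k, j) = (if k = pivot I j then 1 else 0)"
proof -
  note D = crrefD [OF C]
  consider "k = pivot I j" | "k \<in> I" "k \<noteq> pivot I j" | "k < pivot I j"
    using free k j unfolding free_entries_def by fastforce
  then show ?thesis
  proof cases
    case 2
    then obtain j' where "j' < r" "pivot I j' = k" "j' \<noteq> j"
      using pivot_surj [OF D(4)] D(3) by metis
    then show ?thesis using D(5) [of j' j] j 2 by simp
  qed (use D(5,6) j in auto)
qed

lemma card_crref:
  assumes Im: "I \<subseteq> {0..<m}" and cI: "card I = r"
  shows "card {Hm. crref m r Hm I} = 2 ^ card (inversions m I)" and "finite {Hm. crref m r Hm I}"
proof -
  have finI: "finite I" using Im finite_subset by blast
  have pm: "pivot I j < m" if "j < r" for j using pivot_in [OF finI, of j] that cI Im by auto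
  let ?F = "free_entries m r I"
  let ?f = "\<lambda>Hm :: bit mat. restrict (\<lambda>(k, j). Hm $$ (k, j)) ?F"
  let ?g = "\<lambda>G. mat m r (\<lambda>(k, j). if (k, j) \<in> ?F then G (k, j) else if k = pivot I j then 1 else 0)
    :: bit mat"
  have bij: "bij_betw ?f {Hm. crref m r Hm I} (?F \<rightarrow>\<^sub>E (UNIV :: bit set))"
  proof (rule bij_betwI [where g = ?g])
    show "?f \<in> {Hm. crref m r Hm I} \<rightarrow> ?F \<rightarrow>\<^sub>E UNIV" by auto
    have "crref m r (?g G) I" for G
      unfolding crref_def Let_def
    proof (intro conjI allI impI)
      fix j assume j: "j < r"
      show "?g G $$ (pivot I j, k) = (if j = k then 1 else 0)" if "k < r" for k
        using pm [OF j] that j pivot_in [OF finI, of j] pivot_inj_iff [OF finI, of j k] cI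
        by (auto simp: free_entries_def)
      show "?g G $$ (i, j) = 0" if "i < pivot I j" for i
        using pm [OF j] that j by (auto simp: free_entries_def)
    qed (use Im cI in auto)
    then show "?g \<in> (?F \<rightarrow>\<^sub>E UNIV) \<rightarrow> {Hm. crref m r Hm I}" by simp
    show "?g (?f Hm) = Hm" if "Hm \<in> {Hm. crref m r Hm I}" for Hm
      using that crrefD(1) [of m r Hm I] crref_fixed_entry [of m r Hm I]
      by (intro eq_matI) auto
    show "?f (?g G) = G" if "G \<in> ?F \<rightarrow>\<^sub>E UNIV" for G
    proof (rule ext)
      fix p
      show "?f (?g G) p = G p"
        using that by (cases p) (auto simp: free_entries_def PiE_def extensional_def)
    qed
  qed
  show "card {Hm. crref m r Hm I} = 2 ^ card (inversions m I)" "finite {Hm. crref m r Hm I}"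
    using bij_betw_same_card [OF bij] bij_betw_finite [OF bij] card_free_entries [OF finI cI]
      finite_free_entries by (auto simp: card_PiE finite_PiE)
qed

lemma card_grass:
  "card (grass m r) = (\<Sum>I | I \<subseteq> {0..<m} \<and> card I = r. 2 ^ card (inversions m I))"
proof -
  define Ps where "Ps = {I. I \<subseteq> {0..<m} \<and> card I = r}"
  define E where "E = (SIGMA I:Ps. {Hm. crref m r Hm I})"
  have finPs: "finite Ps" unfolding Ps_def by (rule finite_subset [of _ "Pow {0..<m}"]) auto
  have "bij_betw (\<lambda>(I, Hm). vec_space.col_space m Hm) E (grass m r)"
    unfolding bij_betw_def
  proof
    show "inj_on (\<lambda>(I, Hm). vec_space.col_space m Hm) E"
    proof (rule inj_onI, clarify)
      fix I Hm I' Hm' assume "(I, Hm) \<in> E" "(I', Hm') \<in> E"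
        and "vec_space.col_space m Hm = vec_space.col_space m Hm'"
      then show "I = I' \<and> Hm = Hm'" using crref_unique [of m r Hm I Hm' I'] unfolding E_def by auto
    qed
    have "vec_space.col_space m Hm \<in> grass m r" if "crref m r Hm I" for Hm I
      using crref_col_space_grass [OF that] .
    moreover have "H \<in> (\<lambda>(I, Hm). vec_space.col_space m Hm) ` E" if H: "H \<in> grass m r" for H
    proof -
      obtain Hm I where C: "crref m r Hm I" "vec_space.col_space m Hm = H"
        using crref_exists [OF H] by blast
      then have "(I, Hm) \<in> E" unfolding E_def Ps_def using crrefD(2,3) [OF C(1)] by auto
      then show ?thesis using C(2) by force
    qed
    ultimately show "(\<lambda>(I, Hm). vec_space.col_space m Hm) ` E = grass m r"
      unfolding E_def by auto
  qed
  then have "card (grass m r) = card E" by (simp add: bij_betw_same_card)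
  also have "\<dots> = (\<Sum>I\<in>Ps. card {Hm. crref m r Hm I})"
    unfolding E_def using finPs card_crref(2) by (subst card_SigmaI) (auto simp: Ps_def)
  also have "\<dots> = (\<Sum>I\<in>Ps. 2 ^ card (inversions m I))"
    by (rule sum.cong [OF refl]) (auto simp: Ps_def card_crref(1))
  finally show ?thesis unfolding Ps_def .
qed

lemma card_inversions_Suc:
  assumes "I \<subseteq> {0..<m}"
  shows "card (inversions (Suc m) I) = card (inversions m I) + card I"
proof -
  have finI: "finite I" using assms finite_subset by blast
  have eq: "inversions (Suc m) I = inversions m I \<union> (\<lambda>a. (a, m)) ` I"
    using assms unfolding inversions_def by auto
  have "card (inversions (Suc m) I) = card (inversions m I) + card ((\<lambda>a. (a, m)) ` I)"
    unfolding eq by (rule card_Un_disjoint) (use finite_inversions finI in \<open>auto simp: inversions_def\<close>)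
  also have "card ((\<lambda>a. (a, m)) ` I) = card I" by (rule card_image) (auto simp: inj_on_def)
  finally show ?thesis .
qed

lemma inversions_Suc_insert:
  assumes "I \<subseteq> {0..<m}"
  shows "inversions (Suc m) (insert m I) = inversions m I"
  using assms unfolding inversions_def by auto

text \<open>The exponent of \<open>2\<close> attached to a pivot set \<open>I\<close>: the number of entries of a symmetric
  \<open>|I| \<times> |I|\<close> matrix plus the number of free entries of an echelon matrix with pivots \<open>I\<close>.\<close>

definition pivot_weight :: "nat \<Rightarrow> nat set \<Rightarrow> nat" where
  "pivot_weight m I = card I * (card I + 1) div 2 + card (inversions m I)"

lemma pivot_weight_Suc:
  assumes "I \<subseteq> {0..<m}"
  shows "pivot_weight (Suc m) I = pivot_weight m I + card I"
  using card_inversions_Suc [OF assms] unfolding pivot_weight_def by simp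

lemma pivot_weight_Suc_insert:
  assumes I: "I \<subseteq> {0..<m}"
  shows "pivot_weight (Suc m) (insert m I) = pivot_weight m I + Suc (card I)"
proof -
  have "finite I" using I by (rule finite_subset) simp
  moreover have "m \<notin> I" using I by auto
  ultimately have "card (insert m I) = Suc (card I)" by simp
  moreover have "Suc k * (Suc k + 1) div 2 = k * (k + 1) div 2 + Suc k" for k :: nat
  proof -
    have "Suc k * (Suc k + 1) = k * (k + 1) + 2 * Suc k" by simp
    then show ?thesis by simp
  qed
  ultimately show ?thesis using inversions_Suc_insert [OF I] unfolding pivot_weight_def by simp
qed

lemma prod_one_plus_pow2_Suc:
  "(1 + 2 * (x :: nat)) * (\<Prod>i=1..m. 1 + 2 ^ i * (2 * x)) = (\<Prod>i=1..Suc m. 1 + 2 ^ i * x)"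
proof (induction m)
  case (Suc m)
  have "(\<Prod>i=1..Suc m. 1 + 2 ^ i * (2 * x)) = (\<Prod>i=1..m. 1 + 2 ^ i * (2 * x)) * (1 + 2 ^ Suc m * (2 * x))"
    using prod.nat_ivl_Suc' [of 1 m "\<lambda>i. 1 + 2 ^ i * (2 * x)"] by (simp add: mult.commute)
  then have "(1 + 2 * x) * (\<Prod>i=1..Suc m. 1 + 2 ^ i * (2 * x))
      = ((1 + 2 * x) * (\<Prod>i=1..m. 1 + 2 ^ i * (2 * x))) * (1 + 2 ^ Suc (Suc m) * x)"
    by (simp only: mult.assoc power_Suc mult.left_commute)
  also have "\<dots> = (\<Prod>i=1..Suc (Suc m). 1 + 2 ^ i * x)" unfolding Suc.IH by simp
  finally show ?case .
qed simp

text \<open>Adding the coordinate \<open>m\<close> either keeps a pivot set \<open>I\<close>, creating one new inversion per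
  pivot, or makes \<open>m\<close> a pivot, which adds \<open>|I| + 1\<close> symmetric entries.\<close>

lemma sum_pivot_weights:
  "(\<Sum>I\<in>Pow {0..<m}. 2 ^ pivot_weight m I * (x :: nat) ^ card I) = (\<Prod>i=1..m. 1 + 2 ^ i * x)"
proof (induction m arbitrary: x)
  case 0
  have "inversions 0 {} = {}" unfolding inversions_def by auto
  then show ?case by (simp add: pivot_weight_def)
next
  case (Suc m)
  let ?S = "\<Sum>I\<in>Pow {0..<m}. 2 ^ pivot_weight m I * (2 * x) ^ card I"
  have inj: "inj_on (insert m) (Pow {0..<m})"
    by (rule inj_onI) (metis PowD atLeastLessThan_iff insert_ident less_irrefl subsetD)
  have card_insert: "card (insert m I) = Suc (card I)" if "I \<in> Pow {0..<m}" for I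
  proof -
    have "finite I" "m \<notin> I" using that finite_subset by auto
    then show ?thesis by simp
  qed
  have old: "(\<Sum>I\<in>Pow {0..<m}. 2 ^ pivot_weight (Suc m) I * x ^ card I) = ?S"
    by (rule sum.cong [OF refl]) (simp add: pivot_weight_Suc power_add power_mult_distrib mult.assoc)
  have new: "(\<Sum>I\<in>insert m ` Pow {0..<m}. 2 ^ pivot_weight (Suc m) I * x ^ card I) = 2 * x * ?S"
    unfolding sum.reindex [OF inj] o_def sum_distrib_left
    by (rule sum.cong [OF refl])
      (simp add: pivot_weight_Suc_insert card_insert power_add power_mult_distrib ac_simps)
  have "Pow {0..<Suc m} = Pow {0..<m} \<union> insert m ` Pow {0..<m}"
    by (simp add: atLeast0_lessThan_Suc Pow_insert)
  moreover have "Pow {0..<m} \<inter> insert m ` Pow {0..<m} = {}" by auto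
  ultimately have "(\<Sum>I\<in>Pow {0..<Suc m}. 2 ^ pivot_weight (Suc m) I * x ^ card I) = ?S + 2 * x * ?S"
    using old new by (simp add: sum.union_disjoint)
  also have "\<dots> = (1 + 2 * x) * (\<Prod>i=1..m. 1 + 2 ^ i * (2 * x))"
    unfolding Suc.IH by (simp add: algebra_simps)
  finally show ?case unfolding prod_one_plus_pow2_Suc .
qed

lemma sum_gauss_binom2_eq_prod:
  "(\<Sum>r=0..m. 2 ^ (r * (r + 1) div 2) * gauss_binom2 m r) = (\<Prod>i=1..m. 2 ^ i + 1)"
proof -
  have "2 ^ (r * (r + 1) div 2) * gauss_binom2 m r
      = (\<Sum>I | I \<in> Pow {0..<m} \<and> card I = r. 2 ^ pivot_weight m I)" for r
    unfolding gauss_binom2_def card_grass sum_distrib_left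
    by (intro sum.cong) (auto simp: pivot_weight_def power_add)
  then have "(\<Sum>r=0..m. 2 ^ (r * (r + 1) div 2) * gauss_binom2 m r)
      = (\<Sum>r=0..m. \<Sum>I | I \<in> Pow {0..<m} \<and> card I = r. 2 ^ pivot_weight m I)"
    by simp
  also have "\<dots> = (\<Sum>I\<in>Pow {0..<m}. 2 ^ pivot_weight m I)"
  proof (rule sum.group)
    show "card ` Pow {0..<m} \<subseteq> {0..m}"
      using card_mono [of "{0..<m}"] by (auto simp: image_def)
  qed auto
  also have "\<dots> = (\<Prod>i=1..m. 1 + 2 ^ i * 1)"
    using sum_pivot_weights [of m 1] by simp
  finally show ?thesis by (simp add: add.commute)
qed

section \<open>The completion matrix P\<close>

definition completion_mat :: "nat \<Rightarrow> bit mat \<Rightarrow> nat set \<Rightarrow> bit mat" where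
  "completion_mat m Hm I = mat_of_cols m (cols Hm @ map (unit_vec m) (sorted_list_of_set ({0..<m} - I)))"

lemma P_mat_eq_completion_mat:
  "P_mat m r H = completion_mat m (fst (echelon m r H)) (snd (echelon m r H))"
  by (simp add: P_mat_def completion_mat_def split: prod.split)

context
  fixes m r Hm I
  assumes C: "crref m r Hm I"
begin

private lemma card_non_pivots: "card ({0..<m} - I) = m - r"
  using crrefD(2-4) [OF C] by (simp add: card_Diff_subset)

private lemma length_completion_cols:
  "length (cols Hm @ map (unit_vec m) (sorted_list_of_set ({0..<m} - I))) = m"
  using crrefD(1) [OF C] card_non_pivots crref_le [OF C] by simp

lemma completion_mat_carrier: "completion_mat m Hm I \<in> carrier_mat m m"
  unfolding completion_mat_def using length_completion_cols by (metis mat_of_cols_carrier(1))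

lemma completion_mat_index:
  assumes k: "k < m" and j: "j < m"
  shows "completion_mat m Hm I $$ (k, j) =
    (if j < r then Hm $$ (k, j) else if k = pivot ({0..<m} - I) (j - r) then 1 else 0)"
proof -
  have "completion_mat m Hm I $$ (k, j) =
      (cols Hm @ map (unit_vec m) (sorted_list_of_set ({0..<m} - I))) ! j $ k"
    unfolding completion_mat_def
    using mat_of_cols_index [OF k, of j "cols Hm @ map (unit_vec m) (sorted_list_of_set ({0..<m} - I))"]
      length_completion_cols j by simp
  then show ?thesis
    using crrefD(1) [OF C] k j card_non_pivots by (auto simp: nth_append unit_vec_def)
qed

lemma completion_mat_mult_index:
  assumes k: "k < m" and x: "x \<in> carrier_vec m"
  shows "(completion_mat m Hm I *\<^sub>v x) $ k = (\<Sum>j\<in>{0..<r}. Hm $$ (k, j) * x $ j) +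
     (\<Sum>t\<in>{0..<m - r}. (if k = pivot ({0..<m} - I) t then 1 else 0) * x $ (r + t))"
proof -
  have "(completion_mat m Hm I *\<^sub>v x) $ k = (\<Sum>j\<in>{0..<m}. completion_mat m Hm I $$ (k, j) * x $ j)"
    using index_mult_mat_vec_sum [of k "completion_mat m Hm I" x] completion_mat_carrier k x by auto
  also have "\<dots> = (\<Sum>j\<in>{0..<r}. completion_mat m Hm I $$ (k, j) * x $ j) +
     (\<Sum>t\<in>{0..<m - r}. completion_mat m Hm I $$ (k, r + t) * x $ (r + t))"
    by (rule sum_split_at [OF crref_le [OF C]])
  also have "\<dots> = (\<Sum>j\<in>{0..<r}. Hm $$ (k, j) * x $ j) +
     (\<Sum>t\<in>{0..<m - r}. (if k = pivot ({0..<m} - I) t then 1 else 0) * x $ (r + t))"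
    using completion_mat_index k crref_le [OF C] by (intro arg_cong2 [where f = "(+)"] sum.cong) auto
  finally show ?thesis .
qed

text \<open>Rows \<open>I\<close> of \<open>P\<close> see only the first \<open>r\<close> coordinates, through the identity block of
  \<open>H_I\<close>; the remaining rows then see exactly the last \<open>m - r\<close> coordinates.\<close>

lemma completion_mat_kernel:
  assumes x: "x \<in> carrier_vec m" and z: "completion_mat m Hm I *\<^sub>v x = 0\<^sub>v m"
  shows "x = 0\<^sub>v m"
proof -
  note D = crrefD [OF C]
  let ?J = "{0..<m} - I"
  have pivJ: "pivot ?J t \<in> ?J" if "t < m - r" for t using pivot_in [of ?J] that card_non_pivots by simp
  have x1: "x $ l = 0" if l: "l < r" for l
  proof -
    have "0 = (completion_mat m Hm I *\<^sub>v x) $ pivot I l" using z D(7) [OF l] by simp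
    also have "\<dots> = (\<Sum>j\<in>{0..<r}. Hm $$ (pivot I l, j) * x $ j)"
      using completion_mat_mult_index [OF D(7) [OF l] x] pivJ pivot_in [OF D(4), of l] l D(3)
      by (auto intro!: sum.neutral)
    also have "\<dots> = (\<Sum>j\<in>{0..<r}. x $ j * (if l = j then 1 else 0))"
      by (rule sum.cong) (use D(5) [OF l] in auto)
    also have "\<dots> = x $ l" using sum_bit_delta [of "{0..<r}" "\<lambda>j. x $ j" l] l by simp
    finally show ?thesis by simp
  qed
  have x2: "x $ (r + t) = 0" if t: "t < m - r" for t
  proof -
    have km: "pivot ?J t < m" using pivJ [OF t] by auto
    have "0 = (completion_mat m Hm I *\<^sub>v x) $ pivot ?J t" using z km by simp
    also have "\<dots> = (\<Sum>s\<in>{0..<m - r}. x $ (r + s) * (if t = s then 1 else 0))"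
      using completion_mat_mult_index [OF km x] x1 pivot_inj_iff [of ?J t] t card_non_pivots
      by (auto intro!: sum.cong)
    also have "\<dots> = x $ (r + t)" using sum_bit_delta [of "{0..<m - r}" "\<lambda>s. x $ (r + s)" t] t by simp
    finally show ?thesis by simp
  qed
  show ?thesis
  proof (rule eq_vecI)
    fix i assume "i < dim_vec (0\<^sub>v m)"
    then show "x $ i = 0\<^sub>v m $ i"
      using x1 x2 [of "i - r"] by (cases "i < r") auto
  qed (use x in simp)
qed

lemma mat_inv_completion_mat:
  "mat_inv m (completion_mat m Hm I) \<in> carrier_mat m m"
  "completion_mat m Hm I * mat_inv m (completion_mat m Hm I) = 1\<^sub>m m"
  "mat_inv m (completion_mat m Hm I) * completion_mat m Hm I = 1\<^sub>m m"
proof -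
  have "det (completion_mat m Hm I) \<noteq> 0"
    using det_0_iff_vec_prod_zero [OF completion_mat_carrier] completion_mat_kernel by blast
  from det_non_zero_imp_unit [OF completion_mat_carrier this, where b = "()"]
  have "\<exists>B. B \<in> carrier_mat m m \<and> completion_mat m Hm I * B = 1\<^sub>m m \<and> B * completion_mat m Hm I = 1\<^sub>m m"
    unfolding Units_def ring_mat_def by auto
  then show "mat_inv m (completion_mat m Hm I) \<in> carrier_mat m m"
    "completion_mat m Hm I * mat_inv m (completion_mat m Hm I) = 1\<^sub>m m"
    "mat_inv m (completion_mat m Hm I) * completion_mat m Hm I = 1\<^sub>m m"
    unfolding mat_inv_def by (metis (mono_tags, lifting) someI_ex)+
qed

end

lemma diag_mat_mult_index:
  assumes y: "y \<in> carrier_vec m" and i: "i < m"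
  shows "(mat m m (\<lambda>(i, j). if i = j \<and> Q i then 1 else 0) *\<^sub>v y) $ i = (if Q i then y $ i else (0 :: bit))"
proof -
  have "(mat m m (\<lambda>(i, j). if i = j \<and> Q i then 1 else 0) *\<^sub>v y) $ i =
     (\<Sum>j\<in>{0..<m}. (if i = j \<and> Q i then 1 else 0) * y $ j)"
    using index_mult_mat_vec_sum [of i "mat m m (\<lambda>(i, j). if i = j \<and> Q i then 1 else 0)" y] y i by auto
  also have "\<dots> = (\<Sum>j\<in>{0..<m}. if i = j then (if Q i then y $ i else 0) else 0)"
    by (rule sum.cong) auto
  finally show ?thesis using i by simp
qed

lemma I_lower_eq: "I_lower m r = mat m m (\<lambda>(i, j). if i = j \<and> \<not> i < r then 1 else 0)"
  unfolding I_lower_def I_upper_def by (intro eq_matI) auto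

lemma dim_I_upper_I_lower_embed_sym [simp]:
  "dim_row (I_upper m r) = m" "dim_col (I_upper m r) = m"
  "dim_row (I_lower m r) = m" "dim_col (I_lower m r) = m"
  "dim_row (embed_sym m S) = m" "dim_col (embed_sym m S) = m"
  unfolding embed_sym_def I_lower_def I_upper_def by auto

lemma I_upper_carrier [simp]: "I_upper m r \<in> carrier_mat m m"
  unfolding I_upper_def by auto

lemma I_lower_carrier [simp]: "I_lower m r \<in> carrier_mat m m"
  unfolding I_lower_eq by auto

lemma embed_sym_carrier [simp]: "embed_sym m S \<in> carrier_mat m m"
  unfolding embed_sym_def by auto

lemma I_upper_mult_index:
  "y \<in> carrier_vec m \<Longrightarrow> i < m \<Longrightarrow> (I_upper m r *\<^sub>v y) $ i = (if i < r then y $ i else 0)"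
  unfolding I_upper_def by (rule diag_mat_mult_index)

lemma I_lower_mult_index:
  "y \<in> carrier_vec m \<Longrightarrow> i < m \<Longrightarrow> (I_lower m r *\<^sub>v y) $ i = (if i < r then 0 else y $ i)"
  unfolding I_lower_eq using diag_mat_mult_index [of y m i "\<lambda>i. \<not> i < r"] by auto

lemma transpose_I_upper [simp]: "transpose_mat (I_upper m r) = I_upper m r"
  unfolding I_upper_def by (intro eq_matI) auto

lemma transpose_I_lower [simp]: "transpose_mat (I_lower m r) = I_lower m r"
  unfolding I_lower_eq by (intro eq_matI) auto

lemma transpose_embed_sym: "S \<in> sym_mats r \<Longrightarrow> transpose_mat (embed_sym m S) = embed_sym m S"
  unfolding embed_sym_def sym_mats_def
  by (intro eq_matI) (auto, metis carrier_matD index_transpose_mat(1))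

lemma embed_sym_I_upper_mult_index:
  assumes S: "S \<in> carrier_mat r r" and y: "y \<in> carrier_vec m" and i: "i < m" and rm: "r \<le> m"
  shows "(embed_sym m S *\<^sub>v (I_upper m r *\<^sub>v y)) $ i = (if i < r then (S *\<^sub>v vec r (\<lambda>j. y $ j)) $ i else 0)"
proof -
  let ?u = "I_upper m r *\<^sub>v y"
  have "?u \<in> carrier_vec m" using mult_mat_vec_carrier [OF I_upper_carrier y] .
  then have "(embed_sym m S *\<^sub>v ?u) $ i = (\<Sum>j\<in>{0..<m}. embed_sym m S $$ (i, j) * ?u $ j)"
    using index_mult_mat_vec_sum [of i "embed_sym m S" ?u] i by auto
  also have "\<dots> = (\<Sum>j\<in>{0..<r}. embed_sym m S $$ (i, j) * ?u $ j) +
      (\<Sum>t\<in>{0..<m - r}. embed_sym m S $$ (i, r + t) * ?u $ (r + t))"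
    by (rule sum_split_at [OF rm])
  also have "\<dots> = (if i < r then (\<Sum>j\<in>{0..<r}. S $$ (i, j) * y $ j) else 0)"
    using S i rm I_upper_mult_index [OF y] unfolding embed_sym_def by (auto intro!: sum.neutral sum.cong)
  also have "\<dots> = (if i < r then (S *\<^sub>v vec r (\<lambda>j. y $ j)) $ i else 0)"
    using S by (auto simp: scalar_prod_def)
  finally show ?thesis .
qed

lemma I_lower_I_upper_orthogonal:
  assumes y: "y \<in> carrier_vec m" and y': "y' \<in> carrier_vec m"
  shows "(I_lower m r *\<^sub>v y) \<bullet> (I_upper m r *\<^sub>v y') = 0"
  unfolding scalar_prod_def
proof (rule sum.neutral, rule ballI)
  fix i assume "i \<in> {0..<dim_vec (I_upper m r *\<^sub>v y')}"
  then have i: "i < m" by simp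
  show "(I_lower m r *\<^sub>v y) $ i * (I_upper m r *\<^sub>v y') $ i = 0"
    by (cases "i < r") (simp_all del: index_mult_mat_vec add: I_upper_mult_index [OF y' i] I_lower_mult_index [OF y i])
qed

section \<open>The Lagrangian attached to a triple\<close>

lemma vec_eq_by_first_last:
  assumes "x \<in> carrier_vec (2 * m)" and "y \<in> carrier_vec (2 * m)"
    and "vec_first x m = vec_first y m" and "vec_last x m = vec_last y m"
  shows "x = y"
proof -
  have x: "x \<in> carrier_vec (m + m)" and y: "y \<in> carrier_vec (m + m)"
    using assms by (simp_all add: mult_2)
  show ?thesis using vec_first_last_append [OF x] vec_first_last_append [OF y] assms(3,4) by metis
qed

locale lag_triple =
  fixes m r H S
  assumes H_grass: "H \<in> grass m r" and S_sym: "S \<in> sym_mats r"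
begin

text \<open>In the notation of the paper: \<open>Hm = H_I\<close>, \<open>P = P_I\<close>, \<open>U = I_{m|r}\<close>, \<open>Lo = I_{m|-r}\<close> and
  \<open>St\<close> is \<open>S_r\<close> embedded in the upper left corner.\<close>

definition "Hm = fst (echelon m r H)"
definition "I = snd (echelon m r H)"
definition "P = P_mat m r H"
definition "Pinv = mat_inv m P"
definition "U = I_upper m r"
definition "Lo = I_lower m r"
definition "St = embed_sym m S"
definition "A = U * transpose_mat P"
definition "B = (U * St + Lo) * Pinv"
definition "M = hconcat A B"

lemma crref_Hm: "crref m r Hm I" and col_space_Hm: "vec_space.col_space m Hm = H"
  using echelon_crref [OF H_grass] unfolding Hm_def I_def by auto

lemma r_le_m: "r \<le> m"
  using crref_le [OF crref_Hm] .

lemma P_eq: "P = completion_mat m Hm I"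
  unfolding P_def Hm_def I_def P_mat_eq_completion_mat ..

lemma P_carrier [simp]: "P \<in> carrier_mat m m"
  and Pinv_carrier [simp]: "Pinv \<in> carrier_mat m m"
  and P_Pinv: "P * Pinv = 1\<^sub>m m" and Pinv_P: "Pinv * P = 1\<^sub>m m"
  using completion_mat_carrier [OF crref_Hm] mat_inv_completion_mat [OF crref_Hm]
  unfolding P_eq Pinv_def by auto

lemma S_carrier: "S \<in> carrier_mat r r"
  using S_sym sym_mats_def by auto

lemma U_carrier [simp]: "U \<in> carrier_mat m m"
  and Lo_carrier [simp]: "Lo \<in> carrier_mat m m"
  and St_carrier [simp]: "St \<in> carrier_mat m m"
  unfolding U_def Lo_def St_def by auto

lemma A_carrier [simp]: "A \<in> carrier_mat m m"
  unfolding A_def using mult_carrier_mat [OF U_carrier, of "transpose_mat P" m] by simp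

lemma B_carrier [simp]: "B \<in> carrier_mat m m"
  unfolding B_def using mult_carrier_mat [of "U * St + Lo" m m Pinv m] by simp

lemma dims [simp]:
  "dim_row A = m" "dim_col A = m" "dim_row B = m" "dim_col B = m"
  "dim_row P = m" "dim_col P = m" "dim_row Pinv = m" "dim_col Pinv = m"
  "dim_row U = m" "dim_col U = m" "dim_row Lo = m" "dim_col Lo = m"
  "dim_row St = m" "dim_col St = m"
  using A_carrier B_carrier P_carrier Pinv_carrier U_carrier Lo_carrier St_carrier
  by (simp_all only: carrier_matD)

lemma M_carrier: "M \<in> carrier_mat m (2 * m)"
  unfolding M_def hconcat_def carrier_mat_def by simp

lemma dim_M [simp]: "dim_row M = m" "dim_col M = 2 * m"
  using M_carrier by (simp_all only: carrier_matD)

lemma mult_vec_carrier [simp]: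
  "y \<in> carrier_vec m \<Longrightarrow> U *\<^sub>v y \<in> carrier_vec m"
  "y \<in> carrier_vec m \<Longrightarrow> Lo *\<^sub>v y \<in> carrier_vec m"
  "y \<in> carrier_vec m \<Longrightarrow> St *\<^sub>v y \<in> carrier_vec m"
  "y \<in> carrier_vec m \<Longrightarrow> P *\<^sub>v y \<in> carrier_vec m"
  "y \<in> carrier_vec m \<Longrightarrow> Pinv *\<^sub>v y \<in> carrier_vec m"
  "y \<in> carrier_vec m \<Longrightarrow> transpose_mat P *\<^sub>v y \<in> carrier_vec m"
  "y \<in> carrier_vec m \<Longrightarrow> transpose_mat Pinv *\<^sub>v y \<in> carrier_vec m"
  by (auto intro: mult_mat_vec_carrier [of _ m m])

lemma transpose_M_mult_carrier [simp]: "transpose_mat M *\<^sub>v y \<in> carrier_vec (2 * m)"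
  by (rule carrier_vecI) simp

lemma row_space_eq: "vec_space.row_space (2 * m) M = (\<lambda>y. transpose_mat M *\<^sub>v y) ` carrier_vec m"
  using vec_space.row_space_eq [OF M_carrier] M_carrier by auto

lemma row_space_f2_subspace: "f2_subspace (2 * m) (vec_space.row_space (2 * m) M)"
proof -
  interpret V: vec_space "TYPE(bit)" "2 * m" .
  show ?thesis unfolding V.row_space_def
    by (rule V.span_is_subspace) (use M_carrier in \<open>auto simp: rows_def\<close>)
qed

lemma lag_map_eq: "lag_map m (r, H, S) = vec_space.row_space (2 * m) M"
  unfolding lag_map_def M_def A_def B_def U_def Lo_def St_def Pinv_def P_def Let_def prod.case ..

lemma transpose_M_mult_index:
  assumes y: "y \<in> carrier_vec m" and i: "i < 2 * m"
  shows "(transpose_mat M *\<^sub>v y) $ i =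
    (if i < m then (transpose_mat A *\<^sub>v y) $ i else (transpose_mat B *\<^sub>v y) $ (i - m))"
proof -
  have "(transpose_mat M *\<^sub>v y) $ i = (\<Sum>k\<in>{0..<m}. M $$ (k, i) * y $ k)"
    using index_mult_mat_vec_sum [of i "transpose_mat M" y] M_carrier y i by auto
  also have "\<dots> = (if i < m then (\<Sum>k\<in>{0..<m}. A $$ (k, i) * y $ k) else (\<Sum>k\<in>{0..<m}. B $$ (k, i - m) * y $ k))"
    unfolding M_def hconcat_def using A_carrier B_carrier i by (auto simp: carrier_matD intro!: sum.cong)
  also have "\<dots> = (if i < m then (transpose_mat A *\<^sub>v y) $ i else (transpose_mat B *\<^sub>v y) $ (i - m))"
    using index_mult_mat_vec_sum [of i "transpose_mat A" y] index_mult_mat_vec_sum [of "i - m" "transpose_mat B" y]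
      y i A_carrier B_carrier by auto
  finally show ?thesis .
qed

lemma vec_first_transpose_M:
  "y \<in> carrier_vec m \<Longrightarrow> vec_first (transpose_mat M *\<^sub>v y) m = transpose_mat A *\<^sub>v y"
proof (rule eq_vecI)
  fix i assume y: "y \<in> carrier_vec m" and "i < dim_vec (transpose_mat A *\<^sub>v y)"
  then have i: "i < m" by simp
  show "vec_first (transpose_mat M *\<^sub>v y) m $ i = (transpose_mat A *\<^sub>v y) $ i"
    using transpose_M_mult_index [OF y, of i] i by (simp add: vec_first_def del: index_mult_mat_vec)
qed simp

lemma vec_last_transpose_M:
  "y \<in> carrier_vec m \<Longrightarrow> vec_last (transpose_mat M *\<^sub>v y) m = transpose_mat B *\<^sub>v y"
proof (rule eq_vecI)
  fix i assume y: "y \<in> carrier_vec m" and "i < dim_vec (transpose_mat B *\<^sub>v y)"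
  then have i: "i < m" by simp
  have "dim_vec (transpose_mat M *\<^sub>v y) = 2 * m" using M_carrier by simp
  then show "vec_last (transpose_mat M *\<^sub>v y) m $ i = (transpose_mat B *\<^sub>v y) $ i"
    using transpose_M_mult_index [OF y, of "m + i"] i by (simp add: vec_last_def del: index_mult_mat_vec)
qed simp

lemma vec_first_param: "y \<in> carrier_vec m \<Longrightarrow> vec_first (transpose_mat M *\<^sub>v y) m = P *\<^sub>v (U *\<^sub>v y)"
  using vec_first_transpose_M transpose_mult [OF U_carrier, of "transpose_mat P" m]
    assoc_mult_mat_vec [OF P_carrier U_carrier]
  unfolding A_def U_def by simp

lemma vec_last_param:
  assumes y: "y \<in> carrier_vec m"
  shows "transpose_mat P *\<^sub>v vec_last (transpose_mat M *\<^sub>v y) m = St *\<^sub>v (U *\<^sub>v y) + Lo *\<^sub>v y"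
proof -
  have SU_Lo: "St * U + Lo \<in> carrier_mat m m" by simp
  have "transpose_mat B = transpose_mat Pinv * transpose_mat (U * St + Lo)"
    unfolding B_def by (rule transpose_mult [of "U * St + Lo" m m Pinv m]) auto
  also have "transpose_mat (U * St + Lo) = transpose_mat (U * St) + transpose_mat Lo"
    by (rule transpose_add [of _ m m]) auto
  also have "transpose_mat (U * St) = St * U"
    using transpose_mult [OF U_carrier St_carrier] transpose_embed_sym [OF S_sym] unfolding St_def U_def by simp
  finally have BT: "transpose_mat B = transpose_mat Pinv * (St * U + Lo)" unfolding Lo_def by simp
  have PT_PinvT: "transpose_mat P * transpose_mat Pinv = 1\<^sub>m m"
    using transpose_mult [OF Pinv_carrier P_carrier] Pinv_P by simp
  have "transpose_mat P *\<^sub>v vec_last (transpose_mat M *\<^sub>v y) m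
      = transpose_mat P *\<^sub>v (transpose_mat Pinv *\<^sub>v ((St * U + Lo) *\<^sub>v y))"
    using vec_last_transpose_M [OF y] BT y assoc_mult_mat_vec [of "transpose_mat Pinv" m m "St * U + Lo" m y]
    by simp
  also have "\<dots> = (St * U + Lo) *\<^sub>v y"
    using y PT_PinvT assoc_mult_mat_vec [of "transpose_mat P" m m "transpose_mat Pinv" m]
      mult_mat_vec_carrier [OF SU_Lo y] by simp
  also have "\<dots> = St *\<^sub>v (U *\<^sub>v y) + Lo *\<^sub>v y"
    using y add_mult_distrib_mat_vec [of "St * U" m m Lo y] assoc_mult_mat_vec [OF St_carrier U_carrier y]
    by (simp add: mult_carrier_mat [OF St_carrier U_carrier])
  finally show ?thesis .
qed

lemma P_U_mult: 
  assumes y: "y \<in> carrier_vec m"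
  shows "P *\<^sub>v (U *\<^sub>v y) = Hm *\<^sub>v vec r (\<lambda>j. y $ j)"
proof (rule eq_vecI)
  have Hm_carrier: "Hm \<in> carrier_mat m r" using crrefD(1) [OF crref_Hm] .
  fix k assume "k < dim_vec (Hm *\<^sub>v vec r (\<lambda>j. y $ j))"
  then have k: "k < m" using Hm_carrier by simp
  have "(P *\<^sub>v (U *\<^sub>v y)) $ k = (\<Sum>j\<in>{0..<r}. Hm $$ (k, j) * (U *\<^sub>v y) $ j) +
     (\<Sum>t\<in>{0..<m - r}. (if k = pivot ({0..<m} - I) t then 1 else 0) * (U *\<^sub>v y) $ (r + t))"
    using completion_mat_mult_index [OF crref_Hm k] y P_eq by simp
  also have "\<dots> = (\<Sum>j\<in>{0..<r}. Hm $$ (k, j) * y $ j)"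
    using I_upper_mult_index [OF y] r_le_m unfolding U_def by (simp del: index_mult_mat_vec)
  also have "\<dots> = (Hm *\<^sub>v vec r (\<lambda>j. y $ j)) $ k"
    using index_mult_mat_vec_sum [of k Hm "vec r (\<lambda>j. y $ j)"] Hm_carrier k by simp
  finally show "(P *\<^sub>v (U *\<^sub>v y)) $ k = (Hm *\<^sub>v vec r (\<lambda>j. y $ j)) $ k" .
qed (use crrefD(1) [OF crref_Hm] in simp)

lemma vec_last_param_index:
  assumes y: "y \<in> carrier_vec m" and i: "i < m"
  shows "(transpose_mat P *\<^sub>v vec_last (transpose_mat M *\<^sub>v y) m) $ i =
    (if i < r then (S *\<^sub>v vec r (\<lambda>j. y $ j)) $ i else y $ i)"
  using vec_last_param [OF y] embed_sym_I_upper_mult_index [OF S_carrier y i r_le_m]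
    I_lower_mult_index [OF y i] i y
  unfolding St_def U_def Lo_def by simp

lemma transpose_M_mult_inj: "inj_on (\<lambda>y. transpose_mat M *\<^sub>v y) (carrier_vec m)"
proof (rule inj_onI)
  fix y y' assume y: "y \<in> carrier_vec m" and y': "y' \<in> carrier_vec m"
    and eq: "transpose_mat M *\<^sub>v y = transpose_mat M *\<^sub>v y'"
  have "Hm *\<^sub>v vec r (\<lambda>j. y $ j) = vec_first (transpose_mat M *\<^sub>v y) m"
    using vec_first_param [OF y] P_U_mult [OF y] by simp
  also have "\<dots> = Hm *\<^sub>v vec r (\<lambda>j. y' $ j)"
    using vec_first_param [OF y'] P_U_mult [OF y'] eq by simp
  finally have vec_eq: "vec r (\<lambda>j. y $ j) = vec r (\<lambda>j. y' $ j)"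
    using inj_onD [OF crref_mult_inj [OF crref_Hm]] by simp
  have first: "y $ i = y' $ i" if "i < r" for i
  proof -
    have "vec r (\<lambda>j. y $ j) $ i = vec r (\<lambda>j. y' $ j) $ i" unfolding vec_eq ..
    then show ?thesis using that by simp
  qed
  have last: "y $ i = y' $ i" if "i < m" "\<not> i < r" for i
    using vec_last_param_index [OF y that(1)] vec_last_param_index [OF y' that(1)] eq that by simp
  show "y = y'"
  proof (rule eq_vecI)
    fix i assume "i < dim_vec y'"
    then show "y $ i = y' $ i" using first last y' by (cases "i < r") auto
  qed (use y y' in simp)
qed

lemma card_row_space: "card (vec_space.row_space (2 * m) M) = 2 ^ m"
  using row_space_eq card_image [OF transpose_M_mult_inj] card_carrier_vec_bit by simp

lemma row_space_grass: "vec_space.row_space (2 * m) M \<in> grass (2 * m) m"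
proof -
  have "(2 :: nat) ^ f2_dim (2 * m) (vec_space.row_space (2 * m) M) = 2 ^ m"
    using card_f2_subspace [OF row_space_f2_subspace] card_row_space by simp
  then show ?thesis using grass_iff row_space_f2_subspace by simp
qed

lemma transpose_Pinv_transpose_P_mult:
  assumes w: "w \<in> carrier_vec m"
  shows "transpose_mat Pinv *\<^sub>v (transpose_mat P *\<^sub>v w) = w"
proof -
  have "transpose_mat Pinv * transpose_mat P = 1\<^sub>m m"
    using transpose_mult [OF P_carrier Pinv_carrier] P_Pinv by simp
  then show ?thesis using assoc_mult_mat_vec [of "transpose_mat Pinv" m m "transpose_mat P" m w] w by simp
qed

text \<open>With \<open>u = U y\<close> and \<open>u' = U y'\<close>, both halves of the symplectic form equal \<open>S u \<bullet> u'\<close>: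
  this uses the symmetry of \<open>S\<close> and the orthogonality of the images of \<open>U\<close> and \<open>Lo\<close>.\<close>

lemma row_space_isotropic:
  assumes x: "x \<in> vec_space.row_space (2 * m) M" and x': "x' \<in> vec_space.row_space (2 * m) M"
  shows "symp_form m x x' = 0"
proof -
  obtain y where y: "y \<in> carrier_vec m" and xy: "x = transpose_mat M *\<^sub>v y" using x row_space_eq by auto
  obtain y' where y': "y' \<in> carrier_vec m" and xy': "x' = transpose_mat M *\<^sub>v y'" using x' row_space_eq by auto
  define z where "z = vec_last x m"
  define z' where "z' = vec_last x' m"
  define u where "u = U *\<^sub>v y"
  define u' where "u' = U *\<^sub>v y'"
  have zc: "z \<in> carrier_vec m" "z' \<in> carrier_vec m" unfolding z_def z'_def by auto
  have uc: "u \<in> carrier_vec m" "u' \<in> carrier_vec m" unfolding u_def u'_def using y y' by auto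
  have Lyc: "Lo *\<^sub>v y \<in> carrier_vec m" "Lo *\<^sub>v y' \<in> carrier_vec m" using y y' by auto
  have Suc: "St *\<^sub>v u \<in> carrier_vec m" "St *\<^sub>v u' \<in> carrier_vec m" using uc by auto
  have first: "vec_first x m = P *\<^sub>v u" "vec_first x' m = P *\<^sub>v u'"
    using vec_first_param [OF y] vec_first_param [OF y'] xy xy' u_def u'_def by auto
  have last: "transpose_mat P *\<^sub>v z = St *\<^sub>v u + Lo *\<^sub>v y" "transpose_mat P *\<^sub>v z' = St *\<^sub>v u' + Lo *\<^sub>v y'"
    using vec_last_param [OF y] vec_last_param [OF y'] xy xy' u_def u'_def z_def z'_def by auto
  have orth: "(Lo *\<^sub>v y) \<bullet> u' = 0" "(Lo *\<^sub>v y') \<bullet> u = 0"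
    using I_lower_I_upper_orthogonal [OF y y'] I_lower_I_upper_orthogonal [OF y' y]
    unfolding Lo_def U_def u_def u'_def by auto
  have "z \<bullet> (P *\<^sub>v u') = (transpose_mat P *\<^sub>v z) \<bullet> u'"
    using transpose_vec_mult_scalar [OF P_carrier uc(2) zc(1)] by simp
  also have "\<dots> = (St *\<^sub>v u) \<bullet> u'"
    using last(1) add_scalar_prod_distrib [OF Suc(1) Lyc(1) uc(2)] orth by simp
  finally have t1: "z \<bullet> (P *\<^sub>v u') = (St *\<^sub>v u) \<bullet> u'" .
  have "(P *\<^sub>v u) \<bullet> z' = (transpose_mat P *\<^sub>v z') \<bullet> u"
    using comm_scalar_prod [of "P *\<^sub>v u" m z'] transpose_vec_mult_scalar [OF P_carrier uc(1) zc(2)] uc zc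
    by simp
  also have "\<dots> = (St *\<^sub>v u') \<bullet> u"
    using last(2) add_scalar_prod_distrib [OF Suc(2) Lyc(2) uc(1)] orth by simp
  also have "\<dots> = (transpose_mat St *\<^sub>v u') \<bullet> u"
    using transpose_embed_sym [OF S_sym] unfolding St_def by simp
  also have "\<dots> = (St *\<^sub>v u) \<bullet> u'"
    using transpose_vec_mult_scalar [OF St_carrier uc(1) uc(2)] comm_scalar_prod [of u' m "St *\<^sub>v u"] uc Suc
    by simp
  finally have t2: "(P *\<^sub>v u) \<bullet> z' = (St *\<^sub>v u) \<bullet> u'" .
  show ?thesis unfolding symp_form_def using t1 t2 first z_def z'_def by simp
qed

lemma lag_map_mem_lagrangians: "lag_map m (r, H, S) \<in> lagrangians m"
  unfolding lagrangians_def lag_map_eq using row_space_grass row_space_isotropic by auto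

lemma vec_first_row_space: "(\<lambda>x. vec_first x m) ` vec_space.row_space (2 * m) M = H"
proof -
  have Hm_carrier: "Hm \<in> carrier_mat m r" using crrefD(1) [OF crref_Hm] .
  have "(\<lambda>x. vec_first x m) ` vec_space.row_space (2 * m) M
      = (\<lambda>y. Hm *\<^sub>v vec r (\<lambda>j. y $ j)) ` carrier_vec m"
    unfolding row_space_eq image_image using vec_first_param P_U_mult by (intro image_cong) simp_all
  also have "\<dots> = (\<lambda>x. Hm *\<^sub>v x) ` carrier_vec r"
  proof (intro equalityI subsetI)
    fix h assume "h \<in> (\<lambda>x. Hm *\<^sub>v x) ` carrier_vec r"
    then obtain x where x: "x \<in> carrier_vec r" and h: "h = Hm *\<^sub>v x" by blast
    define y where "y = vec m (\<lambda>j. if j < r then x $ j else 0)"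
    have yx: "vec r (\<lambda>j. y $ j) = x"
      using x r_le_m unfolding y_def by (intro eq_vecI) auto
    show "h \<in> (\<lambda>y. Hm *\<^sub>v vec r (\<lambda>j. y $ j)) ` carrier_vec m"
    proof (rule image_eqI [where x = y])
      show "h = Hm *\<^sub>v vec r (\<lambda>j. y $ j)" using h yx by simp
    qed (simp add: y_def)
  qed auto
  finally show ?thesis using col_space_Hm col_space_eq_image [OF Hm_carrier] by simp
qed

lemma sym_entry_from_row_space:
  assumes x: "x \<in> vec_space.row_space (2 * m) M" and j: "j < r" and k: "k < r"
    and first: "vec_first x m = Hm *\<^sub>v unit_vec r j"
  shows "(transpose_mat P *\<^sub>v vec_last x m) $ k = S $$ (k, j)"
proof -
  obtain y where y: "y \<in> carrier_vec m" and xy: "x = transpose_mat M *\<^sub>v y"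
    using x row_space_eq by auto
  have "Hm *\<^sub>v vec r (\<lambda>i. y $ i) = Hm *\<^sub>v unit_vec r j"
    using first vec_first_param [OF y] P_U_mult [OF y] xy by simp
  then have "vec r (\<lambda>i. y $ i) = unit_vec r j"
    using inj_onD [OF crref_mult_inj [OF crref_Hm]] by simp
  then show ?thesis
    using vec_last_param_index [OF y, of k] k r_le_m j S_carrier xy by simp
qed

lemma row_space_memI:
  assumes x: "x \<in> carrier_vec (2 * m)" and c: "c \<in> carrier_vec r"
    and first: "vec_first x m = Hm *\<^sub>v c"
    and last: "\<And>i. i < r \<Longrightarrow> (transpose_mat P *\<^sub>v vec_last x m) $ i = (S *\<^sub>v c) $ i"
  shows "x \<in> vec_space.row_space (2 * m) M"
proof -
  define b where "b = vec_last x m"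
  define y where "y = vec m (\<lambda>i. if i < r then c $ i else (transpose_mat P *\<^sub>v b) $ i)"
  have y: "y \<in> carrier_vec m" unfolding y_def by simp
  have yc: "vec r (\<lambda>j. y $ j) = c"
    using c r_le_m unfolding y_def by (intro eq_vecI) auto
  have "vec_first (transpose_mat M *\<^sub>v y) m = vec_first x m"
    using vec_first_param [OF y] P_U_mult [OF y] yc first by simp
  moreover have "transpose_mat P *\<^sub>v vec_last (transpose_mat M *\<^sub>v y) m = transpose_mat P *\<^sub>v b"
  proof (rule eq_vecI)
    fix i assume "i < dim_vec (transpose_mat P *\<^sub>v b)"
    then have i: "i < m" by simp
    show "(transpose_mat P *\<^sub>v vec_last (transpose_mat M *\<^sub>v y) m) $ i = (transpose_mat P *\<^sub>v b) $ i"
      using vec_last_param_index [OF y i] yc last [of i] i unfolding b_def y_def by auto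
  qed simp
  then have "vec_last (transpose_mat M *\<^sub>v y) m = vec_last x m"
    using transpose_Pinv_transpose_P_mult [of b] transpose_Pinv_transpose_P_mult [of "vec_last (transpose_mat M *\<^sub>v y) m"]
    unfolding b_def by (metis vec_last_carrier)
  ultimately have "x = transpose_mat M *\<^sub>v y"
    using vec_eq_by_first_last [OF x transpose_M_mult_carrier] by simp
  then show ?thesis using row_space_eq y by simp
qed

end

section \<open>Injectivity and surjectivity\<close>

lemma inj_on_lag_map: "inj_on (lag_map m) (triples m)"
proof (rule inj_onI)
  fix t t' assume "t \<in> triples m" "t' \<in> triples m" and eq: "lag_map m t = lag_map m t'"
  then obtain r H S r' H' S' where t: "t = (r, H, S)" "t' = (r', H', S')"
    and in_t: "H \<in> grass m r" "S \<in> sym_mats r" and in_t': "H' \<in> grass m r'" "S' \<in> sym_mats r'"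
    unfolding triples_def by auto
  interpret T: lag_triple m r H S using in_t by unfold_locales
  interpret T': lag_triple m r' H' S' using in_t' by unfold_locales
  have L: "vec_space.row_space (2 * m) T.M = vec_space.row_space (2 * m) T'.M"
    using eq t T.lag_map_eq T'.lag_map_eq by simp
  have H: "H = H'" using T.vec_first_row_space T'.vec_first_row_space L by simp
  then have r: "r = r'" using in_t(1) in_t'(1) grass_iff by metis
  have same: "T'.Hm = T.Hm" "T'.P = T.P"
    unfolding T.Hm_def T'.Hm_def T.P_def T'.P_def H r by simp_all
  have "S = S'"
  proof (rule eq_matI)
    fix k j assume "k < dim_row S'" "j < dim_col S'"
    then have k: "k < r" and j: "j < r" using T'.S_carrier r by auto
    let ?x = "transpose_mat T.M *\<^sub>v unit_vec m j"
    have x: "?x \<in> vec_space.row_space (2 * m) T.M" using T.row_space_eq by simp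
    have unit: "vec r (\<lambda>i. unit_vec m j $ i) = unit_vec r j"
      using j T.r_le_m by (intro eq_vecI) auto
    have "vec_first ?x m = T.Hm *\<^sub>v vec r (\<lambda>i. unit_vec m j $ i)"
      using T.vec_first_param T.P_U_mult by simp
    then have "vec_first ?x m = T.Hm *\<^sub>v unit_vec r j" unfolding unit .
    then show "S $$ (k, j) = S' $$ (k, j)"
      using T.sym_entry_from_row_space [OF x j k] T'.sym_entry_from_row_space [of ?x j k] x L same r j k
      by simp
  qed (use T.S_carrier T'.S_carrier r in auto)
  then show "t = t'" using t H r by simp
qed

lemma symp_form_sum:
  assumes "x \<in> carrier_vec (2 * m)" and "w \<in> carrier_vec (2 * m)"
  shows "symp_form m x w = (\<Sum>k\<in>{0..<m}. x $ (m + k) * w $ k) + (\<Sum>k\<in>{0..<m}. x $ k * w $ (m + k))"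
  using assms unfolding symp_form_def scalar_prod_def vec_last_def vec_first_def
  by (auto intro!: arg_cong2 [where f = "(+)"] sum.cong)

text \<open>The vector \<open>x + \<Sum> c j * lift j \<in> L\<close> has vanishing first half; pair it with \<open>lift i\<close>.\<close>

lemma isotropic_pairing_lincomb:
  fixes r m :: nat
  assumes W: "f2_subspace (2 * m) L" and iso: "\<forall>x\<in>L. \<forall>y\<in>L. symp_form m x y = 0"
    and xL: "x \<in> L" and liftL: "\<And>j. j < r \<Longrightarrow> lift j \<in> L"
    and first: "\<And>k. k < m \<Longrightarrow> x $ k = (\<Sum>j\<in>{0..<r}. c j * lift j $ k)"
    and i: "i < r"
  shows "(\<Sum>k\<in>{0..<m}. x $ (m + k) * lift i $ k)
    = (\<Sum>j\<in>{0..<r}. c j * (\<Sum>k\<in>{0..<m}. lift j $ (m + k) * lift i $ k))"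
proof -
  define z' where "z' = vec (2 * m) (\<lambda>k. \<Sum>j\<in>{0..<r}. c j * lift j $ k)"
  have z'L: "z' \<in> L" unfolding z'_def by (rule f2_subspace_lincomb [OF W]) (use liftL in auto)
  define z where "z = x + z'"
  have zL: "z \<in> L" unfolding z_def by (rule f2_subspace_add [OF W xL z'L])
  have z'c: "z' \<in> carrier_vec (2 * m)" unfolding z'_def by simp
  have zc: "z \<in> carrier_vec (2 * m)" unfolding z_def using f2_subspace_carrierD [OF W xL] z'c by simp
  have lift_i_carrier: "lift i \<in> carrier_vec (2 * m)" using f2_subspace_carrierD [OF W liftL [OF i]] .
  have z_first: "z $ k = 0" if k: "k < m" for k
    unfolding z_def z'_def using z'c k first [OF k] by simp
  have z_last: "z $ (m + k) = x $ (m + k) + (\<Sum>j\<in>{0..<r}. c j * lift j $ (m + k))" if k: "k < m" for k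
    unfolding z_def z'_def using z'c k by simp
  have "0 = symp_form m z (lift i)" using iso zL liftL [OF i] by simp
  also have "\<dots> = (\<Sum>k\<in>{0..<m}. z $ (m + k) * lift i $ k) + (\<Sum>k\<in>{0..<m}. z $ k * lift i $ (m + k))"
    by (rule symp_form_sum [OF zc lift_i_carrier])
  also have "(\<Sum>k\<in>{0..<m}. z $ k * lift i $ (m + k)) = 0" by (rule sum.neutral) (simp add: z_first)
  also have "(\<Sum>k\<in>{0..<m}. z $ (m + k) * lift i $ k) =
      (\<Sum>k\<in>{0..<m}. x $ (m + k) * lift i $ k + (\<Sum>j\<in>{0..<r}. c j * (lift j $ (m + k) * lift i $ k)))"
    by (rule sum.cong [OF refl]) (simp add: z_last distrib_right sum_distrib_right mult.assoc)
  also have "\<dots> = (\<Sum>k\<in>{0..<m}. x $ (m + k) * lift i $ k)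
      + (\<Sum>j\<in>{0..<r}. c j * (\<Sum>k\<in>{0..<m}. lift j $ (m + k) * lift i $ k))"
    by (simp add: sum.distrib sum_distrib_left sum.swap [of _ "{0..<m}"])
  finally show ?thesis by (simp add: bit_add_eq_0_iff)
qed

lemma f2_subspace_vec_first_image:
  assumes W: "f2_subspace (2 * m) L"
  shows "f2_subspace m ((\<lambda>x. vec_first x m) ` L)"
proof (rule f2_subspaceI)
  have "vec_first (0\<^sub>v (2 * m)) m = 0\<^sub>v m" unfolding vec_first_def by (intro eq_vecI) auto
  then show "0\<^sub>v m \<in> (\<lambda>x. vec_first x m) ` L" using f2_subspace_zero [OF W] by (metis image_eqI)
next
  fix u v assume "u \<in> (\<lambda>x. vec_first x m) ` L" "v \<in> (\<lambda>x. vec_first x m) ` L"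
  then obtain x y where x: "x \<in> L" and y: "y \<in> L" and u: "u = vec_first x m" and v: "v = vec_first y m"
    by blast
  have "u + v = vec_first (x + y) m"
    unfolding u v vec_first_def using f2_subspace_carrierD [OF W y] by (intro eq_vecI) auto
  then show "u + v \<in> (\<lambda>x. vec_first x m) ` L" using f2_subspace_add [OF W x y] by (metis image_eqI)
next
  fix c u assume "u \<in> (\<lambda>x. vec_first x m) ` L"
  then obtain x where x: "x \<in> L" and u: "u = vec_first x m" by blast
  have "c \<cdot>\<^sub>v u = vec_first (c \<cdot>\<^sub>v x) m"
    unfolding u vec_first_def using f2_subspace_carrierD [OF W x] by (intro eq_vecI) auto
  then show "c \<cdot>\<^sub>v u \<in> (\<lambda>x. vec_first x m) ` L" using f2_subspace_smult [OF W x] by (metis image_eqI)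
qed auto

locale lagrangian =
  fixes m L
  assumes L_lagrangian: "L \<in> lagrangians m"
begin

definition "H = (\<lambda>x. vec_first x m) ` L"
definition "r = f2_dim m H"
definition "Hm = fst (echelon m r H)"
definition "lift j = (SOME x. x \<in> L \<and> vec_first x m = Hm *\<^sub>v unit_vec r j)" for j
definition "S = mat r r (\<lambda>(k, j). \<Sum>l\<in>{0..<m}. lift j $ (m + l) * lift k $ l)"

lemma L_subspace: "f2_subspace (2 * m) L"
  and L_isotropic: "\<forall>x\<in>L. \<forall>y\<in>L. symp_form m x y = 0"
  and card_L: "card L = 2 ^ m"
  using L_lagrangian card_grass_member grass_iff unfolding lagrangians_def by auto

lemma H_grass: "H \<in> grass m r"
  using f2_subspace_vec_first_image [OF L_subspace] grass_iff unfolding H_def r_def by auto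

lemma r_le_m: "r \<le> m"
proof -
  have "card H \<le> card (carrier_vec m :: bit vec set)"
    using H_grass grass_iff f2_subspace_carrier by (metis card_mono finite_carrier_vec_bit)
  then show ?thesis using card_grass_member [OF H_grass] card_carrier_vec_bit by simp
qed

lemma crref_Hm: "crref m r Hm (snd (echelon m r H))"
  and col_space_Hm: "vec_space.col_space m Hm = H"
  using echelon_crref [OF H_grass] unfolding Hm_def by auto

lemma lift: 
  assumes j: "j < r"
  shows "lift j \<in> L" and "vec_first (lift j) m = Hm *\<^sub>v unit_vec r j"
proof -
  have "Hm *\<^sub>v unit_vec r j \<in> H"
    using col_space_Hm col_space_eq_image [OF crrefD(1) [OF crref_Hm]] by auto
  then have "\<exists>x. x \<in> L \<and> vec_first x m = Hm *\<^sub>v unit_vec r j" unfolding H_def by auto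
  then show "lift j \<in> L" "vec_first (lift j) m = Hm *\<^sub>v unit_vec r j"
    unfolding lift_def by (metis (mono_tags, lifting) someI_ex)+
qed

lemma lift_index: 
  assumes j: "j < r" and k: "k < m"
  shows "lift j $ k = Hm $$ (k, j)"
proof -
  have "lift j $ k = vec_first (lift j) m $ k" unfolding vec_first_def using k by simp
  then show ?thesis using lift(2) [OF j] mult_unit_vec_index [OF crrefD(1) [OF crref_Hm] j k] by simp
qed

lemma S_sym: "S \<in> sym_mats r"
proof -
  have "S $$ (k, j) = S $$ (j, k)" if k: "k < r" and j: "j < r" for k j
  proof -
    have lift_carrier: "lift i \<in> carrier_vec (2 * m)" if "i < r" for i
      using f2_subspace_carrierD [OF L_subspace lift(1) [OF that]] .
    have "symp_form m (lift j) (lift k) = 0" using L_isotropic lift(1) j k by simp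
    then have "(\<Sum>l\<in>{0..<m}. lift j $ (m + l) * lift k $ l) = (\<Sum>l\<in>{0..<m}. lift k $ (m + l) * lift j $ l)"
      using symp_form_sum [OF lift_carrier [OF j] lift_carrier [OF k]] by (simp add: bit_add_eq_0_iff mult.commute)
    then show ?thesis unfolding S_def using j k by simp
  qed
  then show ?thesis unfolding sym_mats_def S_def by (auto intro!: eq_matI)
qed

lemma first_half_lincomb:
  assumes c: "c \<in> carrier_vec r" and xc: "vec_first x m = Hm *\<^sub>v c" and k: "k < m"
  shows "x $ k = (\<Sum>j\<in>{0..<r}. c $ j * lift j $ k)"
proof -
  have Hm_carrier: "Hm \<in> carrier_mat m r" using crrefD(1) [OF crref_Hm] .
  have "x $ k = vec_first x m $ k" unfolding vec_first_def using k by simp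
  then have "x $ k = (Hm *\<^sub>v c) $ k" unfolding xc .
  then show ?thesis
    using index_mult_mat_vec_sum [of k Hm c] Hm_carrier c k lift_index
    by (auto simp: mult.commute intro: sum.cong)
qed

lemma transpose_P_mat_vec_last_index:
  assumes xL: "x \<in> L" and i: "i < r"
  shows "(transpose_mat (P_mat m r H) *\<^sub>v vec_last x m) $ i = (\<Sum>k\<in>{0..<m}. x $ (m + k) * lift i $ k)"
proof -
  let ?P = "completion_mat m Hm (snd (echelon m r H))"
  have P: "P_mat m r H = ?P" unfolding P_mat_eq_completion_mat Hm_def ..
  have "(transpose_mat ?P *\<^sub>v vec_last x m) $ i = (\<Sum>k\<in>{0..<m}. ?P $$ (k, i) * vec_last x m $ k)"
    using index_mult_mat_vec_sum [of i "transpose_mat ?P" "vec_last x m"] i r_le_m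
      completion_mat_carrier [OF crref_Hm] by simp
  also have "\<dots> = (\<Sum>k\<in>{0..<m}. x $ (m + k) * lift i $ k)"
    using completion_mat_index [OF crref_Hm] lift_index [OF i] i r_le_m
      f2_subspace_carrierD [OF L_subspace xL]
    by (auto simp: vec_last_def mult.commute intro!: sum.cong)
  finally show ?thesis unfolding P .
qed

lemma L_eq_lag_map: "L = lag_map m (r, H, S)"
proof -
  interpret T: lag_triple m r H S using H_grass S_sym by unfold_locales
  have T_Hm: "T.Hm = Hm" unfolding T.Hm_def Hm_def ..
  have "L \<subseteq> vec_space.row_space (2 * m) T.M"
  proof
    fix x assume xL: "x \<in> L"
    have "vec_first x m \<in> H" unfolding H_def using xL by blast
    then obtain c where c: "c \<in> carrier_vec r" and xc: "vec_first x m = Hm *\<^sub>v c"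
      using col_space_Hm col_space_eq_image [OF crrefD(1) [OF crref_Hm]] by auto
    show "x \<in> vec_space.row_space (2 * m) T.M"
    proof (rule T.row_space_memI [OF f2_subspace_carrierD [OF L_subspace xL] c xc [folded T_Hm]])
      fix i assume i: "i < r"
      have "(transpose_mat T.P *\<^sub>v vec_last x m) $ i = (\<Sum>k\<in>{0..<m}. x $ (m + k) * lift i $ k)"
        using transpose_P_mat_vec_last_index [OF xL i] unfolding T.P_def .
      also have "\<dots> = (\<Sum>j\<in>{0..<r}. c $ j * (\<Sum>k\<in>{0..<m}. lift j $ (m + k) * lift i $ k))"
        using isotropic_pairing_lincomb [OF L_subspace L_isotropic xL lift(1) first_half_lincomb [OF c xc] i]
        by simp
      also have "\<dots> = (S *\<^sub>v c) $ i"
        using i c unfolding S_def by (auto simp: scalar_prod_def mult.commute intro: sum.cong)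
      finally show "(transpose_mat T.P *\<^sub>v vec_last x m) $ i = (S *\<^sub>v c) $ i" .
    qed
  qed
  then show ?thesis
    using card_subset_eq [OF finite_f2_subspace [OF T.row_space_f2_subspace]] card_L T.card_row_space
      T.lag_map_eq by simp
qed

lemma mem_image_lag_map: "L \<in> lag_map m ` triples m"
  using L_eq_lag_map r_le_m H_grass S_sym unfolding triples_def by blast

end

lemma bij_betw_lag_map: "bij_betw (lag_map m) (triples m) (lagrangians m)"
proof -
  have "lag_map m ` triples m \<subseteq> lagrangians m"
    using lag_triple.lag_map_mem_lagrangians unfolding triples_def lag_triple_def by blast
  moreover have "lagrangians m \<subseteq> lag_map m ` triples m"
    using lagrangian.mem_image_lag_map lagrangian_def by blast
  ultimately show ?thesis unfolding bij_betw_def using inj_on_lag_map by blast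
qed

section \<open>Counting triples\<close>

lemma card_upper_triangle: "card {(i, j). i \<le> j \<and> j < (r :: nat)} = r * (r + 1) div 2"
proof (induction r)
  case 0 then show ?case by simp
next
  case (Suc r)
  have eq: "{(i, j). i \<le> j \<and> j < Suc r} = {(i, j). i \<le> j \<and> j < r} \<union> (\<lambda>i. (i, r)) ` {0..r}"
    by auto
  have fin: "finite {(i, j). i \<le> j \<and> j < (r :: nat)}"
    by (rule finite_subset [of _ "{0..<r} \<times> {0..<r}"]) auto
  have "card {(i, j). i \<le> j \<and> j < Suc r} = card {(i, j). i \<le> j \<and> j < r} + card ((\<lambda>i. (i, r)) ` {0..r})"
    unfolding eq by (rule card_Un_disjoint) (use fin in auto)
  also have "card ((\<lambda>i. (i, r)) ` {0..r}) = r + 1"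
    by (subst card_image) (auto simp: inj_on_def)
  finally show ?case using Suc by simp
qed

lemma card_sym_mats: "card (sym_mats r) = 2 ^ (r * (r + 1) div 2)"
  and finite_sym_mats: "finite (sym_mats r)"
proof -
  define T where "T = {(i, j). i \<le> j \<and> j < r}"
  have finT: "finite T" unfolding T_def by (rule finite_subset [of _ "{0..<r} \<times> {0..<r}"]) auto
  let ?f = "\<lambda>S :: bit mat. restrict (\<lambda>(i, j). S $$ (i, j)) T"
  let ?g = "\<lambda>F. mat r r (\<lambda>(i, j). if i \<le> j then F (i, j) else F (j, i)) :: bit mat"
  have bij: "bij_betw ?f (sym_mats r) (T \<rightarrow>\<^sub>E (UNIV :: bit set))"
  proof (rule bij_betwI [where g = ?g])
    show "?f \<in> sym_mats r \<rightarrow> T \<rightarrow>\<^sub>E UNIV" by auto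
    show "?g \<in> (T \<rightarrow>\<^sub>E UNIV) \<rightarrow> sym_mats r"
      unfolding sym_mats_def by (auto intro!: eq_matI)
    show "?g (?f S) = S" if S: "S \<in> sym_mats r" for S
    proof -
      have SC: "S \<in> carrier_mat r r" and St: "transpose_mat S = S" using S sym_mats_def by auto
      have sym: "S $$ (j, i) = S $$ (i, j)" if "i < r" "j < r" for i j
        using arg_cong [OF St, of "\<lambda>A. A $$ (i, j)"] that SC by auto
      show ?thesis using SC sym by (intro eq_matI) (auto simp: T_def)
    qed
    show "?f (?g F) = F" if F: "F \<in> T \<rightarrow>\<^sub>E UNIV" for F
    proof (rule ext)
      fix p
      show "?f (?g F) p = F p"
        using F by (cases p) (auto simp: T_def PiE_def extensional_def)
    qed
  qed
  have "card (T \<rightarrow>\<^sub>E (UNIV :: bit set)) = 2 ^ card T" using finT by (simp add: card_PiE)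
  moreover have "card T = r * (r + 1) div 2" unfolding T_def by (rule card_upper_triangle)
  moreover have "finite (T \<rightarrow>\<^sub>E (UNIV :: bit set))" using finT by (simp add: finite_PiE)
  ultimately show "card (sym_mats r) = 2 ^ (r * (r + 1) div 2)" "finite (sym_mats r)"
    using bij_betw_same_card [OF bij] bij_betw_finite [OF bij] by auto
qed

lemma card_triples: "card (triples m) = (\<Sum>r=0..m. 2 ^ (r * (r + 1) div 2) * gauss_binom2 m r)"
proof -
  have "triples m = (SIGMA r:{0..m}. grass m r \<times> sym_mats r)"
    unfolding triples_def by auto
  then have "card (triples m) = (\<Sum>r\<in>{0..m}. card (grass m r \<times> sym_mats r))"
    using finite_grass finite_sym_mats by (simp add: card_SigmaI)
  also have "\<dots> = (\<Sum>r=0..m. 2 ^ (r * (r + 1) div 2) * gauss_binom2 m r)"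
    by (rule sum.cong [OF refl]) (simp add: card_cartesian_product card_sym_mats gauss_binom2_def)
  finally show ?thesis .
qed

theorem mainTheorem2:
  fixes m :: nat
  shows "bij_betw (lag_map m) (triples m) (lagrangians m) \<and>
         card (lagrangians m) = (\<Prod>i=1..m. 2 ^ i + 1) \<and>
         card (lagrangians m) = (\<Sum>r=0..m. 2 ^ (r * (r + 1) div 2) * gauss_binom2 m r)"
proof -
  have "card (lagrangians m) = (\<Sum>r=0..m. 2 ^ (r * (r + 1) div 2) * gauss_binom2 m r)"
    using bij_betw_same_card [OF bij_betw_lag_map] card_triples by simp
  then show ?thesis using bij_betw_lag_map sum_gauss_binom2_eq_prod by simp
qed

end
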